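(* If $\mathcal{I},\mathcal{J}\subseteq\mathcal{B}_\Sigma$ are di-ideals, then $\mathcal{I}\star\mathcal{J}$ is a di-ideal.
   Context: Let $\mathbf{k}$ be a field of characteristic $0$ and $B=\bigoplus_{d\ge0}B_d$ a commutative graded $\mathbf{k}$-algebra with $B_0=\mathbf{k}$, generated by $B_1$, $\dim B_1<\infty$. Let $\mathcal{B}_\Sigma=\bigoplus_{n,d}\mathrm{Sym}^n(B_d)$ (the $\Sigma_n$-coinvariants of $B_d^{\otimes n}$), with product $\cdot$ given by multiplication in $\mathrm{Sym}(B_d)$ (zero between different $d$), and comultiplication $\Delta(w_1\cdots w_n)=\sum_{S\subseteq[n]}w_S\otimes w_{[n]\setminus S}$, $w_S=\prod_{i\in S}w_i$. Let $\mathcal{B}^\Sigma=\bigoplus_{n,d}(B_d^{\otimes n})^{\Sigma_n}$ with product $*:(B_d^{\otimes n})^{\Sigma_n}\otimes(B_e^{\otimes n})^{\Sigma_n}\to(B_{d+e}^{\otimes n})^{\Sigma_n}$ given by factorwise multiplication $(u_1\otimes\cdots\otimes u_n)*(v_1\otimes\cdots\otimes v_n)=u_1v_1\otimes\cdots\otimes u_nv_n$ (zero for different $n$). $\mathfrak{S}:\mathrm{Sym}^n(B_d)\to(B_d^{\otimes n})^{\Sigma_n}$, $w_1\cdots w_n\mapsto\sum_{\tau\in\Sigma_n}w_{\tau(1)}\otimes\cdots\otimes w_{\tau(n)}$, a linear isomorphism. An ideal of $\mathcal{B}_\Sigma$ is a bihomogeneous (in $(d,n)$) subspace closed under $\cdot$-multiplication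 by all elements of $\mathcal{B}_\Sigma$. An ideal $\mathcal{I}\subseteq\mathcal{B}_\Sigma$ is a di-ideal if $\mathfrak{S}(\mathcal{I})$ is an ideal with respect to $*$, i.e. $g*f\in\mathfrak{S}(\mathcal{I})$ for all $f\in\mathfrak{S}(\mathcal{I})$, $g\in\mathcal{B}^\Sigma$. The join $\mathcal{I}\star\mathcal{J}$ of ideals is defined by: $(\mathcal{I}\star\mathcal{J})_{d,n}$ is the kernel of $\mathrm{Sym}^n(B_d)\xrightarrow{\Delta}\bigoplus_{i=0}^n(\mathcal{B}_\Sigma/\mathcal{I})_{d,i}\otimes(\mathcal{B}_\Sigma/\mathcal{J})_{d,n-i}$. *)

theory Defs
  imports Main "HOL.Vector_Spaces" "HOL-Combinatorics.Permutations"
begin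

text \<open>B is a type 'b (a commutative ring with 1), with scalar multiplication sc by the
field 'k, and grading pieces Bd d.\<close>

definition std_graded_algebra :: "('k::field_char_0 \<Rightarrow> 'b::comm_ring_1 \<Rightarrow> 'b) \<Rightarrow> (nat \<Rightarrow> 'b set) \<Rightarrow> bool" where
  "std_graded_algebra sc Bd \<longleftrightarrow>
     vector_space sc
   \<and> (\<forall>c a b. sc c (a * b) = sc c a * b)
   \<and> (\<forall>d. module.subspace sc (Bd d))
   \<and> (\<forall>d e. \<forall>a\<in>Bd d. \<forall>b\<in>Bd e. a * b \<in> Bd (d + e))
   \<and> (\<forall>x. \<exists>!f. (\<forall>d. f d \<in> Bd d) \<and> finite {d. f d \<noteq> 0} \<and> x = (\<Sum>d\<in>{d. f d \<noteq> 0}. f d))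
   \<and> Bd 0 = range (\<lambda>c. sc c 1)
   \<and> (\<forall>x. x \<in> module.span sc (prod_list ` {xs. set xs \<subseteq> Bd 1}))
   \<and> (\<exists>S. finite S \<and> S \<subseteq> Bd 1 \<and> module.span sc S = Bd 1)"

text \<open>Linear functionals on B_d (values outside B_d are irrelevant).\<close>
definition Dual :: "('k::field_char_0 \<Rightarrow> 'b::comm_ring_1 \<Rightarrow> 'b) \<Rightarrow> (nat \<Rightarrow> 'b set) \<Rightarrow> nat \<Rightarrow> ('b \<Rightarrow> 'k) set" where
  "Dual sc Bd d = {\<phi>. (\<forall>x\<in>Bd d. \<forall>y\<in>Bd d. \<phi> (x + y) = \<phi> x + \<phi> y)
                    \<and> (\<forall>c. \<forall>x\<in>Bd d. \<phi> (sc c x) = c * \<phi> x)}"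

text \<open>A formal representative: a finite list of (coefficient, list of n vectors of B_d).\<close>
definition valid :: "(nat \<Rightarrow> 'b set) \<Rightarrow> nat \<Rightarrow> nat \<Rightarrow> ('k \<times> 'b list) list \<Rightarrow> bool" where
  "valid Bd d n r \<longleftrightarrow> (\<forall>(c, ws) \<in> set r. length ws = n \<and> set ws \<subseteq> Bd d)"

text \<open>The element sum c * w_1 ... w_n of Sym^n(B_d), as a polynomial function on the dual.\<close>
definition symel :: "('k::field_char_0 \<Rightarrow> 'b::comm_ring_1 \<Rightarrow> 'b) \<Rightarrow> (nat \<Rightarrow> 'b set) \<Rightarrow> nat \<Rightarrow> ('k \<times> 'b list) list \<Rightarrow> ('b \<Rightarrow> 'k) \<Rightarrow> 'k" where
  "symel sc Bd d r = (\<lambda>\<phi>. if \<phi> \<in> Dual sc Bd d then (\<Sum>(c, ws)\<leftarrow>r. c * prod_list (map \<phi> ws)) else 0)"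

definition SymP :: "('k::field_char_0 \<Rightarrow> 'b::comm_ring_1 \<Rightarrow> 'b) \<Rightarrow> (nat \<Rightarrow> 'b set) \<Rightarrow> nat \<Rightarrow> nat \<Rightarrow> (('b \<Rightarrow> 'k) \<Rightarrow> 'k) set" where
  "SymP sc Bd d n = {symel sc Bd d r | r. valid Bd d n r}"

text \<open>The element sum c * w_1 (x) ... (x) w_n of B_d^{tensor n}, as a multilinear form on the dual.\<close>
definition tensel :: "('k::field_char_0 \<Rightarrow> 'b::comm_ring_1 \<Rightarrow> 'b) \<Rightarrow> (nat \<Rightarrow> 'b set) \<Rightarrow> nat \<Rightarrow> nat \<Rightarrow> ('k \<times> 'b list) list \<Rightarrow> ('b \<Rightarrow> 'k) list \<Rightarrow> 'k" where
  "tensel sc Bd d n r = (\<lambda>\<phi>s. if length \<phi>s = n \<and> set \<phi>s \<subseteq> Dual sc Bd d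
      then (\<Sum>(c, ws)\<leftarrow>r. c * (\<Prod>i<n. (\<phi>s ! i) (ws ! i))) else 0)"

definition TensInv :: "('k::field_char_0 \<Rightarrow> 'b::comm_ring_1 \<Rightarrow> 'b) \<Rightarrow> (nat \<Rightarrow> 'b set) \<Rightarrow> nat \<Rightarrow> nat \<Rightarrow> (('b \<Rightarrow> 'k) list \<Rightarrow> 'k) set" where
  "TensInv sc Bd d n = {F. \<exists>r. valid Bd d n r \<and> F = tensel sc Bd d n r \<and>
      (\<forall>\<sigma>. \<sigma> permutes {..<n} \<longrightarrow> (\<forall>\<phi>s. length \<phi>s = n \<longrightarrow> F (map (\<lambda>i. \<phi>s ! \<sigma> i) [0..<n]) = F \<phi>s))}"

definition Simg :: "('k::field_char_0 \<Rightarrow> 'b::comm_ring_1 \<Rightarrow> 'b) \<Rightarrow> (nat \<Rightarrow> 'b set) \<Rightarrow> nat \<Rightarrow> nat \<Rightarrow> ('k \<times> 'b list) list \<Rightarrow> ('b \<Rightarrow> 'k) list \<Rightarrow> 'k" where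
  "Simg sc Bd d n r = (\<lambda>\<phi>s. if length \<phi>s = n \<and> set \<phi>s \<subseteq> Dual sc Bd d
      then (\<Sum>(c, ws)\<leftarrow>r. c * (\<Sum>\<tau>\<in>{\<tau>. \<tau> permutes {..<n}}. \<Prod>i<n. (\<phi>s ! i) (ws ! \<tau> i))) else 0)"

definition SI :: "('k::field_char_0 \<Rightarrow> 'b::comm_ring_1 \<Rightarrow> 'b) \<Rightarrow> (nat \<Rightarrow> 'b set)
    \<Rightarrow> (nat \<Rightarrow> nat \<Rightarrow> (('b \<Rightarrow> 'k) \<Rightarrow> 'k) set) \<Rightarrow> nat \<Rightarrow> nat \<Rightarrow> (('b \<Rightarrow> 'k) list \<Rightarrow> 'k) set" where
  "SI sc Bd I d n = {Simg sc Bd d n r | r. valid Bd d n r \<and> symel sc Bd d r \<in> I d n}"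

text \<open>Factorwise product of representatives: (u_1 (x)...(x) u_n) * (v_1 (x)...(x) v_n) = u_1v_1 (x)...\<close>
definition tprod :: "('k::times \<times> 'b::times list) list \<Rightarrow> ('k \<times> 'b list) list \<Rightarrow> ('k \<times> 'b list) list" where
  "tprod rg rf = concat (map (\<lambda>(c, us). map (\<lambda>(c', vs). (c * c', map2 (*) us vs)) rf) rg)"

text \<open>A bihomogeneous ideal of B_Sigma, given by its components I d n (a subspace of Sym^n(B_d)).\<close>
definition is_ideal :: "('k::field_char_0 \<Rightarrow> 'b::comm_ring_1 \<Rightarrow> 'b) \<Rightarrow> (nat \<Rightarrow> 'b set)
    \<Rightarrow> (nat \<Rightarrow> nat \<Rightarrow> (('b \<Rightarrow> 'k) \<Rightarrow> 'k) set) \<Rightarrow> bool" where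
  "is_ideal sc Bd I \<longleftrightarrow> (\<forall>d n.
      I d n \<subseteq> SymP sc Bd d n
    \<and> (\<lambda>_. 0) \<in> I d n
    \<and> (\<forall>x\<in>I d n. \<forall>y\<in>I d n. (\<lambda>\<phi>. x \<phi> + y \<phi>) \<in> I d n)
    \<and> (\<forall>c. \<forall>x\<in>I d n. (\<lambda>\<phi>. c * x \<phi>) \<in> I d n)
    \<and> (\<forall>m. \<forall>x\<in>I d n. \<forall>y\<in>SymP sc Bd d m. (\<lambda>\<phi>. y \<phi> * x \<phi>) \<in> I d (m + n)))"

definition di_ideal :: "('k::field_char_0 \<Rightarrow> 'b::comm_ring_1 \<Rightarrow> 'b) \<Rightarrow> (nat \<Rightarrow> 'b set)
    \<Rightarrow> (nat \<Rightarrow> nat \<Rightarrow> (('b \<Rightarrow> 'k) \<Rightarrow> 'k) set) \<Rightarrow> bool" where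
  "di_ideal sc Bd I \<longleftrightarrow> is_ideal sc Bd I \<and>
     (\<forall>d e n rf rg. valid Bd d n rf \<longrightarrow> tensel sc Bd d n rf \<in> SI sc Bd I d n \<longrightarrow>
        valid Bd e n rg \<longrightarrow> tensel sc Bd e n rg \<in> TensInv sc Bd e n \<longrightarrow>
        tensel sc Bd (e + d) n (tprod rg rf) \<in> SI sc Bd I (e + d) n)"

text \<open>Component of bidegree (i, n-i) of the coproduct of the element represented by r,
  as a function on pairs of dual vectors.\<close>
definition Dcomp :: "('k::field_char_0 \<Rightarrow> 'b::comm_ring_1 \<Rightarrow> 'b) \<Rightarrow> (nat \<Rightarrow> 'b set) \<Rightarrow> nat \<Rightarrow> nat \<Rightarrow> nat
    \<Rightarrow> ('k \<times> 'b list) list \<Rightarrow> ('b \<Rightarrow> 'k) \<times> ('b \<Rightarrow> 'k) \<Rightarrow> 'k" where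
  "Dcomp sc Bd d n i r = (\<lambda>(\<phi>, \<psi>). if \<phi> \<in> Dual sc Bd d \<and> \<psi> \<in> Dual sc Bd d then
      (\<Sum>(c, ws)\<leftarrow>r. c * (\<Sum>S\<in>{S. S \<subseteq> {..<n} \<and> card S = i}.
          (\<Prod>k\<in>S. \<phi> (ws ! k)) * (\<Prod>k\<in>{..<n} - S. \<psi> (ws ! k)))) else 0)"

text \<open>A \<otimes> B as functions on pairs, and finite linear spans.\<close>
definition tens2 :: "(('b \<Rightarrow> 'k) \<Rightarrow> 'k::comm_ring_1) set \<Rightarrow> (('b \<Rightarrow> 'k) \<Rightarrow> 'k) set \<Rightarrow> (('b \<Rightarrow> 'k) \<times> ('b \<Rightarrow> 'k) \<Rightarrow> 'k) set" where
  "tens2 A B = {(\<lambda>(\<phi>, \<psi>). a \<phi> * b \<psi>) | a b. a \<in> A \<and> b \<in> B}"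

definition spanF :: "('x \<Rightarrow> 'k::comm_ring_1) set \<Rightarrow> ('x \<Rightarrow> 'k) set" where
  "spanF X = {f. \<exists>xs. set (map snd xs) \<subseteq> X \<and> f = (\<lambda>z. \<Sum>(c, g)\<leftarrow>xs. c * g z)}"

text \<open>The join: kernel of Sym^n(B_d) -> sum_i (B_Sigma/I)_{d,i} (x) (B_Sigma/J)_{d,n-i},
  i.e. the elements whose (i,n-i)-coproduct component lies in I_{d,i} (x) Sym^{n-i} + Sym^i (x) J_{d,n-i}.\<close>
definition join :: "('k::field_char_0 \<Rightarrow> 'b::comm_ring_1 \<Rightarrow> 'b) \<Rightarrow> (nat \<Rightarrow> 'b set)
    \<Rightarrow> (nat \<Rightarrow> nat \<Rightarrow> (('b \<Rightarrow> 'k) \<Rightarrow> 'k) set) \<Rightarrow> (nat \<Rightarrow> nat \<Rightarrow> (('b \<Rightarrow> 'k) \<Rightarrow> 'k) set)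
    \<Rightarrow> nat \<Rightarrow> nat \<Rightarrow> (('b \<Rightarrow> 'k) \<Rightarrow> 'k) set" where
  "join sc Bd I J d n = {x \<in> SymP sc Bd d n. \<forall>r. valid Bd d n r \<longrightarrow> symel sc Bd d r = x \<longrightarrow>
      (\<forall>i\<le>n. Dcomp sc Bd d n i r \<in>
         spanF (tens2 (I d i) (SymP sc Bd d (n - i)) \<union> tens2 (SymP sc Bd d i) (J d (n - i))))}"

end

theory Submission
  imports Defs "HOL-Computational_Algebra.Polynomial"
begin

(* The (i, n - i) coproduct components of an element x of Sym^n(B_d), evaluated at a pair of
   functionals (phi, psi), are the coefficients of the polynomial t |-> x(t phi + psi). Hence they
   depend only on x and are multiplicative, which makes the join an ideal.
   For the di-ideal property, polarisation writes every symmetric tensor as a linear combination of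
   pure powers u (x) ... (x) u, and the product of such a power with S(x) is S(u.x), where u.x
   multiplies every factor of x by u. The coproduct components of u.x are those of x with both
   functionals precomposed with multiplication by u, and a di-ideal is closed under x |-> u.x (apply
   the di-ideal property to the power of u, and use that S is injective in characteristic 0).
   So u.x lies in the join whenever x does. *)

lemma prod_list_map_conv_prod_lessThan:
  assumes "length ws = n"
  shows "prod_list (map f ws) = (\<Prod>k<n. f (ws ! k))"
  using assms by (simp add: prod.list_conv_set_nth atLeast0LessThan)

lemma prod_lessThan_add_expand:
  fixes t :: "'k::comm_ring_1"
  shows "(\<Prod>k<n. t * a k + b k) =
    (\<Sum>i\<le>n. t ^ i * (\<Sum>S\<in>{S. S \<subseteq> {..<n} \<and> card S = i}. (\<Prod>k\<in>S. a k) * (\<Prod>k\<in>{..<n} - S. b k)))"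
proof -
  have "(\<Prod>k<n. t * a k + b k) = (\<Sum>X\<in>Pow {..<n}. (\<Prod>k\<in>X. t * a k) * (\<Prod>k\<in>{..<n}-X. b k))"
    by (rule prod_add) simp
  also have "\<dots> = (\<Sum>X\<in>Pow {..<n}. t ^ card X * ((\<Prod>k\<in>X. a k) * (\<Prod>k\<in>{..<n}-X. b k)))"
    by (simp add: prod.distrib mult.assoc)
  also have "\<dots> = (\<Sum>i\<le>n. \<Sum>X\<in>{X. X \<in> Pow {..<n} \<and> card X = i}. t ^ card X * ((\<Prod>k\<in>X. a k) * (\<Prod>k\<in>{..<n}-X. b k)))"
  proof (rule sum.group[symmetric])
    show "card ` Pow {..<n} \<subseteq> {..n}"
      using card_mono[of "{..<n}"] by fastforce
  qed auto
  also have "\<dots> = (\<Sum>i\<le>n. t ^ i * (\<Sum>S\<in>{S. S \<subseteq> {..<n} \<and> card S = i}. (\<Prod>k\<in>S. a k) * (\<Prod>k\<in>{..<n} - S. b k)))"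
    by (auto simp: sum_distrib_left intro!: sum.cong)
  finally show ?thesis .
qed

lemma sum_list_map_concat: "(\<Sum>x\<leftarrow>concat (map g xs). f x) = (\<Sum>y\<leftarrow>xs. \<Sum>x\<leftarrow>g y. f x)"
  by (induction xs) simp_all

lemma sum_list_sum_commute:
  fixes f :: "'a \<Rightarrow> 'b \<Rightarrow> 'c::comm_monoid_add"
  shows "(\<Sum>x\<leftarrow>xs. \<Sum>y\<in>Y. f x y) = (\<Sum>y\<in>Y. \<Sum>x\<leftarrow>xs. f x y)"
  by (induction xs) (simp_all add: sum.distrib)

lemma sum_list_swap:
  fixes f :: "'a \<Rightarrow> 'b \<Rightarrow> 'c::comm_monoid_add"
  shows "(\<Sum>x\<leftarrow>xs. \<Sum>y\<leftarrow>ys. f x y) = (\<Sum>y\<leftarrow>ys. \<Sum>x\<leftarrow>xs. f x y)"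
  by (induction xs) (simp_all add: sum_list_addf)

lemma prod_list_map_sorted_list_of_set:
  "finite S \<Longrightarrow> prod_list (map f (sorted_list_of_set S)) = prod f S"
  using prod.distinct_set_conv_list[of "sorted_list_of_set S" f] by simp

section \<open>Coproduct components as polynomial coefficients\<close>

lemma valid_Nil: "valid Bd d n []"
  by (simp add: valid_def)

lemma valid_Cons: "valid Bd d n ((c, ws) # r) \<longleftrightarrow> length ws = n \<and> set ws \<subseteq> Bd d \<and> valid Bd d n r"
  by (auto simp: valid_def)

lemma symel_Nil: "symel sc Bd d [] = (\<lambda>_. 0)"
  by (auto simp: symel_def)

lemma symel_Cons:
  "symel sc Bd d ((c, ws) # r) \<phi> =
    (if \<phi> \<in> Dual sc Bd d then c * prod_list (map \<phi> ws) else 0) + symel sc Bd d r \<phi>"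
  by (simp add: symel_def)

lemma Dcomp_Nil: "Dcomp sc Bd d n i [] = (\<lambda>_. 0)"
  by (auto simp: Dcomp_def)

lemma Dcomp_Cons:
  "Dcomp sc Bd d n i ((c, ws) # r) (\<phi>, \<psi>) = (if \<phi> \<in> Dual sc Bd d \<and> \<psi> \<in> Dual sc Bd d then
      c * (\<Sum>S\<in>{S. S \<subseteq> {..<n} \<and> card S = i}. (\<Prod>k\<in>S. \<phi> (ws ! k)) * (\<Prod>k\<in>{..<n} - S. \<psi> (ws ! k))) else 0)
     + Dcomp sc Bd d n i r (\<phi>, \<psi>)"
  by (simp add: Dcomp_def)

lemma Dcomp_outside_Dual:
  "\<not> (\<phi> \<in> Dual sc Bd d \<and> \<psi> \<in> Dual sc Bd d) \<Longrightarrow> Dcomp sc Bd d n i r (\<phi>, \<psi>) = 0"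
  by (auto simp: Dcomp_def)

lemma Dcomp_eq_0_if_gt:
  assumes "n < i"
  shows "Dcomp sc Bd d n i r = (\<lambda>_. 0)"
proof -
  have "card S \<le> n" if "S \<subseteq> {..<n}" for S
    using card_mono[OF finite_lessThan that] by simp
  with assms have none: "{S. S \<subseteq> {..<n} \<and> card S = i} = {}"
    by (metis (mono_tags, lifting) empty_Collect_eq not_le)
  show ?thesis
    unfolding Dcomp_def none by (simp add: fun_eq_iff split_def)
qed

lemma Dual_lincomb:
  assumes "\<phi> \<in> Dual sc Bd d" "\<psi> \<in> Dual sc Bd d"
  shows "(\<lambda>x. t * \<phi> x + \<psi> x) \<in> Dual sc Bd d"
  using assms by (simp add: Dual_def algebra_simps)

definition coprod_poly ::
    "('k::field_char_0 \<Rightarrow> 'b::comm_ring_1 \<Rightarrow> 'b) \<Rightarrow> (nat \<Rightarrow> 'b set) \<Rightarrow> nat \<Rightarrow> nat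
      \<Rightarrow> ('k \<times> 'b list) list \<Rightarrow> ('b \<Rightarrow> 'k) \<Rightarrow> ('b \<Rightarrow> 'k) \<Rightarrow> 'k poly" where
  "coprod_poly sc Bd d n r \<phi> \<psi> = (\<Sum>i\<le>n. monom (Dcomp sc Bd d n i r (\<phi>, \<psi>)) i)"

lemma coeff_coprod_poly: "coeff (coprod_poly sc Bd d n r \<phi> \<psi>) i = Dcomp sc Bd d n i r (\<phi>, \<psi>)"
  by (cases "i \<le> n") (auto simp: coprod_poly_def coeff_sum coeff_monom Dcomp_eq_0_if_gt)

lemma poly_coprod_poly:
  assumes "\<phi> \<in> Dual sc Bd d" "\<psi> \<in> Dual sc Bd d" "valid Bd d n r"
  shows "poly (coprod_poly sc Bd d n r \<phi> \<psi>) t = symel sc Bd d r (\<lambda>x. t * \<phi> x + \<psi> x)"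
  using assms(3)
proof (induction r)
  case Nil
  then show ?case by (simp add: coprod_poly_def Dcomp_Nil symel_Nil poly_sum)
next
  case (Cons a r)
  obtain c ws where a: "a = (c, ws)" by fastforce
  with Cons.prems have len: "length ws = n" and vr: "valid Bd d n r" by (auto simp: valid_Cons)
  define E where "E i = (\<Sum>S\<in>{S. S \<subseteq> {..<n} \<and> card S = i}. (\<Prod>k\<in>S. \<phi> (ws ! k)) * (\<Prod>k\<in>{..<n} - S. \<psi> (ws ! k)))" for i
  define D where "D i = Dcomp sc Bd d n i r (\<phi>, \<psi>)" for i
  have "poly (coprod_poly sc Bd d n (a # r) \<phi> \<psi>) t = (\<Sum>i\<le>n. (c * E i + D i) * t ^ i)"
    using assms(1,2) by (simp add: coprod_poly_def poly_sum poly_monom a Dcomp_Cons E_def D_def)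
  also have "\<dots> = c * (\<Sum>i\<le>n. t ^ i * E i) + (\<Sum>i\<le>n. D i * t ^ i)"
    unfolding sum_distrib_left sum.distrib[symmetric] by (rule sum.cong) (simp_all add: algebra_simps)
  also have "(\<Sum>i\<le>n. t ^ i * E i) = prod_list (map (\<lambda>x. t * \<phi> x + \<psi> x) ws)"
    unfolding E_def prod_lessThan_add_expand[symmetric] using len by (simp add: prod_list_map_conv_prod_lessThan)
  also have "(\<Sum>i\<le>n. D i * t ^ i) = symel sc Bd d r (\<lambda>x. t * \<phi> x + \<psi> x)"
    unfolding Cons.IH[OF vr, symmetric] by (simp add: coprod_poly_def poly_sum poly_monom D_def)
  finally show ?case
    using Dual_lincomb[OF assms(1,2), of t] by (simp add: a symel_Cons)
qed

lemma coprod_poly_eq_if_symel_eq: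
  assumes "\<phi> \<in> Dual sc Bd d" "\<psi> \<in> Dual sc Bd d"
    and "valid Bd d n r1" "valid Bd d n r2" "symel sc Bd d r1 = symel sc Bd d r2"
  shows "coprod_poly sc Bd d n r1 \<phi> \<psi> = coprod_poly sc Bd d n r2 \<phi> \<psi>"
proof -
  have "poly (coprod_poly sc Bd d n r1 \<phi> \<psi>) = poly (coprod_poly sc Bd d n r2 \<phi> \<psi>)"
    using assms by (simp add: fun_eq_iff poly_coprod_poly)
  then show ?thesis by (rule poly_eq_poly_eq_iff[THEN iffD1])
qed

lemma Dcomp_eq_if_symel_eq:
  assumes "valid Bd d n r1" "valid Bd d n r2" "symel sc Bd d r1 = symel sc Bd d r2"
  shows "Dcomp sc Bd d n i r1 = Dcomp sc Bd d n i r2"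
proof (rule ext, clarify)
  fix \<phi> \<psi>
  show "Dcomp sc Bd d n i r1 (\<phi>, \<psi>) = Dcomp sc Bd d n i r2 (\<phi>, \<psi>)"
  proof (cases "\<phi> \<in> Dual sc Bd d \<and> \<psi> \<in> Dual sc Bd d")
    case True
    then show ?thesis
      using coprod_poly_eq_if_symel_eq[OF _ _ assms, of \<phi> \<psi>] by (metis coeff_coprod_poly)
  qed (simp add: Dcomp_outside_Dual)
qed

definition rscale :: "'k::times \<Rightarrow> ('k \<times> 'x) list \<Rightarrow> ('k \<times> 'x) list" where
  "rscale a r = map (\<lambda>(c, w). (a * c, w)) r"

definition rmul :: "('k::times \<times> 'b list) list \<Rightarrow> ('k \<times> 'b list) list \<Rightarrow> ('k \<times> 'b list) list" where
  "rmul r1 r2 = concat (map (\<lambda>(c, ws). map (\<lambda>(c', vs). (c * c', ws @ vs)) r2) r1)"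

lemma valid_append: "valid Bd d n (r1 @ r2) \<longleftrightarrow> valid Bd d n r1 \<and> valid Bd d n r2"
  unfolding valid_def set_append ball_Un ..

lemma valid_concat: "(\<And>x. x \<in> set xs \<Longrightarrow> valid Bd d n (G x)) \<Longrightarrow> valid Bd d n (concat (map G xs))"
  by (induction xs) (auto simp: valid_append valid_Nil)

lemma valid_rscale: "valid Bd d n r \<Longrightarrow> valid Bd d n (rscale a r)"
  by (auto simp: valid_def rscale_def)

lemma valid_rmul: "valid Bd d m r1 \<Longrightarrow> valid Bd d n r2 \<Longrightarrow> valid Bd d (m + n) (rmul r1 r2)"
  by (fastforce simp: valid_def rmul_def)

lemma symel_append: "symel sc Bd d (r1 @ r2) \<phi> = symel sc Bd d r1 \<phi> + symel sc Bd d r2 \<phi>"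
  by (simp add: symel_def)

lemma symel_rscale: "symel sc Bd d (rscale a r) \<phi> = a * symel sc Bd d r \<phi>"
  by (induction r) (auto simp: rscale_def symel_Nil symel_Cons algebra_simps)

lemma symel_concat: "symel sc Bd d (concat (map G xs)) \<phi> = (\<Sum>x\<leftarrow>xs. symel sc Bd d (G x) \<phi>)"
  by (induction xs) (simp_all add: symel_append symel_Nil)

lemma symel_rmul: "symel sc Bd d (rmul r1 r2) \<phi> = symel sc Bd d r1 \<phi> * symel sc Bd d r2 \<phi>"
proof (induction r1)
  case Nil
  then show ?case by (simp add: rmul_def symel_Nil)
next
  case (Cons x r1)
  obtain c ws where x: "x = (c, ws)" by fastforce
  have "symel sc Bd d (map (\<lambda>(c', vs). (c * c', ws @ vs)) r2) \<phi>
      = (if \<phi> \<in> Dual sc Bd d then c * prod_list (map \<phi> ws) else 0) * symel sc Bd d r2 \<phi>"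
    by (induction r2) (auto simp: symel_Nil symel_Cons algebra_simps)
  moreover have "rmul (x # r1) r2 = map (\<lambda>(c', vs). (c * c', ws @ vs)) r2 @ rmul r1 r2"
    by (simp add: rmul_def x)
  ultimately show ?case using Cons by (simp add: symel_append symel_Cons x algebra_simps)
qed

lemma Dcomp_append: "Dcomp sc Bd d n i (r1 @ r2) z = Dcomp sc Bd d n i r1 z + Dcomp sc Bd d n i r2 z"
  by (cases z) (simp add: Dcomp_def)

lemma Dcomp_rscale: "Dcomp sc Bd d n i (rscale a r) z = a * Dcomp sc Bd d n i r z"
  by (cases z, induction r) (auto simp: rscale_def Dcomp_Nil Dcomp_Cons algebra_simps)

lemma Dcomp_rmul:
  assumes "valid Bd d m ry" "valid Bd d n rx"
  shows "Dcomp sc Bd d (m + n) i (rmul ry rx) z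
     = (\<Sum>j\<le>i. Dcomp sc Bd d m j ry z * Dcomp sc Bd d n (i - j) rx z)"
proof (cases z)
  case (Pair \<phi> \<psi>)
  show ?thesis
  proof (cases "\<phi> \<in> Dual sc Bd d \<and> \<psi> \<in> Dual sc Bd d")
    case True
    have "coprod_poly sc Bd d (m + n) (rmul ry rx) \<phi> \<psi> = coprod_poly sc Bd d m ry \<phi> \<psi> * coprod_poly sc Bd d n rx \<phi> \<psi>"
      using True assms
      by (simp add: poly_eq_poly_eq_iff[symmetric] fun_eq_iff poly_coprod_poly valid_rmul symel_rmul)
    then have "coeff (coprod_poly sc Bd d (m + n) (rmul ry rx) \<phi> \<psi>) i
        = coeff (coprod_poly sc Bd d m ry \<phi> \<psi> * coprod_poly sc Bd d n rx \<phi> \<psi>) i"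
      by simp
    then show ?thesis by (simp only: Pair coeff_mult coeff_coprod_poly)
  next
    case False
    then show ?thesis by (simp add: Pair Dcomp_outside_Dual)
  qed
qed

lemma SymP_I: "valid Bd d n r \<Longrightarrow> symel sc Bd d r \<in> SymP sc Bd d n"
  by (auto simp: SymP_def)

lemma SymP_E: "x \<in> SymP sc Bd d n \<Longrightarrow> (\<And>r. valid Bd d n r \<Longrightarrow> x = symel sc Bd d r \<Longrightarrow> P) \<Longrightarrow> P"
  by (auto simp: SymP_def)

lemma SymP_mult:
  assumes "a \<in> SymP sc Bd d m" "b \<in> SymP sc Bd d n"
  shows "(\<lambda>\<phi>. a \<phi> * b \<phi>) \<in> SymP sc Bd d (m + n)"
proof -
  obtain r1 r2 where "valid Bd d m r1" "a = symel sc Bd d r1" "valid Bd d n r2" "b = symel sc Bd d r2"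
    using assms by (metis SymP_E)
  then show ?thesis
    using SymP_I[OF valid_rmul, of Bd d m r1 n r2 sc] by (simp add: symel_rmul[abs_def])
qed

lemma spanF_zero: "(\<lambda>_. 0) \<in> spanF X"
  unfolding spanF_def by (rule CollectI, rule exI[of _ "[]"]) auto

lemma spanF_base: "g \<in> X \<Longrightarrow> g \<in> spanF X"
  unfolding spanF_def by (rule CollectI, rule exI[of _ "[(1, g)]"]) auto

lemma spanF_induct [consumes 1, case_names zero step]:
  assumes "f \<in> spanF X"
    and "P (\<lambda>_. 0)"
    and "\<And>g c h. g \<in> X \<Longrightarrow> P h \<Longrightarrow> P (\<lambda>z. c * g z + h z)"
  shows "P f"
proof -
  from assms(1) obtain xs where xs: "set (map snd xs) \<subseteq> X" "f = (\<lambda>z. \<Sum>(c, g)\<leftarrow>xs. c * g z)"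
    unfolding spanF_def by blast
  from xs(1) have "P (\<lambda>z. \<Sum>(c, g)\<leftarrow>xs. c * g z)"
    by (induction xs) (auto simp: assms(2,3))
  then show ?thesis using xs(2) by simp
qed

lemma spanF_add:
  assumes "f \<in> spanF X" "g \<in> spanF X"
  shows "(\<lambda>z. f z + g z) \<in> spanF X"
proof -
  from assms obtain xs ys where
    "set (map snd xs) \<subseteq> X" "f = (\<lambda>z. \<Sum>(c, g)\<leftarrow>xs. c * g z)"
    "set (map snd ys) \<subseteq> X" "g = (\<lambda>z. \<Sum>(c, g)\<leftarrow>ys. c * g z)"
    unfolding spanF_def by blast
  then show ?thesis
    unfolding spanF_def by (intro CollectI exI[of _ "xs @ ys"]) auto
qed

lemma spanF_scale:
  assumes "f \<in> spanF X"
  shows "(\<lambda>z. c * f z) \<in> spanF X"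
proof -
  from assms obtain xs where xs: "set (map snd xs) \<subseteq> X" "f = (\<lambda>z. \<Sum>(c, g)\<leftarrow>xs. c * g z)"
    unfolding spanF_def by blast
  have "c * (\<Sum>(c', g)\<leftarrow>xs. c' * g z) = (\<Sum>(c', g)\<leftarrow>map (\<lambda>(c', g). (c * c', g)) xs. c' * g z)" for z
    by (induction xs) (auto simp: algebra_simps)
  with xs show ?thesis
    unfolding spanF_def by (intro CollectI exI[of _ "map (\<lambda>(c', g). (c * c', g)) xs"]) auto
qed

lemma spanF_sum:
  assumes "\<And>a. a \<in> A \<Longrightarrow> f a \<in> spanF X"
  shows "(\<lambda>z. \<Sum>a\<in>A. f a z) \<in> spanF X"
  using assms
  by (induction A rule: infinite_finite_induct) (auto simp: spanF_zero spanF_add)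

lemma spanF_mult:
  assumes "f \<in> spanF X" "g \<in> spanF Y"
    and "\<And>a b. a \<in> X \<Longrightarrow> b \<in> Y \<Longrightarrow> (\<lambda>z. a z * b z) \<in> spanF Z"
  shows "(\<lambda>z. f z * g z) \<in> spanF Z"
  using assms(1)
proof (induction rule: spanF_induct)
  case zero
  then show ?case using spanF_zero by simp
next
  case (step a c h)
  from assms(2) have ag: "(\<lambda>z. a z * g z) \<in> spanF Z"
  proof (induction rule: spanF_induct)
    case zero
    then show ?case using spanF_zero by simp
  next
    case (step b c' h')
    then show ?case
      using spanF_add[OF spanF_scale[OF assms(3)[OF \<open>a \<in> X\<close> \<open>b \<in> Y\<close>], of c'] step(2)]
      by (simp add: algebra_simps)
  qed
  show ?case
    using spanF_add[OF spanF_scale[OF ag, of c] step(2)] by (simp add: algebra_simps)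
qed

lemma spanF_subst:
  assumes "f \<in> spanF X"
    and "\<And>g. g \<in> X \<Longrightarrow> (\<lambda>z. if Q z then g (m z) else 0) \<in> spanF Y"
  shows "(\<lambda>z. if Q z then f (m z) else 0) \<in> spanF Y"
  using assms(1)
proof (induction rule: spanF_induct)
  case zero
  then show ?case using spanF_zero by simp
next
  case (step g c h)
  then show ?case
    using spanF_add[OF spanF_scale[OF assms(2)[OF step(1)], of c] step(2)]
    by (simp add: if_distrib cong: if_cong)
qed

lemma tens2_I: "a \<in> A \<Longrightarrow> b \<in> B \<Longrightarrow> (\<lambda>(\<phi>, \<psi>). a \<phi> * b \<psi>) \<in> tens2 A B"
  by (auto simp: tens2_def)

definition subword :: "'b list \<Rightarrow> nat set \<Rightarrow> 'b list" where
  "subword ws S = map (\<lambda>k. ws ! k) (sorted_list_of_set S)"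

lemma Dcomp_single_eq_sum:
  "Dcomp sc Bd d m j [(c, ws)] (\<phi>, \<psi>) = (\<Sum>S | S \<subseteq> {..<m} \<and> card S = j.
     symel sc Bd d [(c, subword ws S)] \<phi> * symel sc Bd d [(1, subword ws ({..<m} - S))] \<psi>)"
proof (cases "\<phi> \<in> Dual sc Bd d \<and> \<psi> \<in> Dual sc Bd d")
  case True
  have "symel sc Bd d [(c, subword ws S)] \<phi> * symel sc Bd d [(1, subword ws ({..<m} - S))] \<psi>
      = c * ((\<Prod>k\<in>S. \<phi> (ws ! k)) * (\<Prod>k\<in>{..<m} - S. \<psi> (ws ! k)))" if "S \<subseteq> {..<m}" for S
  proof -
    have "finite S" using that finite_subset by blast
    with True show ?thesis
      by (simp add: subword_def symel_Cons symel_Nil prod_list_map_sorted_list_of_set comp_def)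
  qed
  then show ?thesis
    using True by (simp add: Dcomp_Cons Dcomp_Nil sum_distrib_left)
next
  case False
  then consider "\<phi> \<notin> Dual sc Bd d" | "\<psi> \<notin> Dual sc Bd d" by blast
  then have zero: "symel sc Bd d [(c, subword ws S)] \<phi> * symel sc Bd d [(1, subword ws ({..<m} - S))] \<psi> = 0" for S
    by cases (simp_all add: symel_def)
  show ?thesis by (simp only: zero Dcomp_outside_Dual[OF False] sum.neutral_const)
qed

lemma Dcomp_in_spanF_tens2_SymP:
  assumes "valid Bd d m r"
  shows "Dcomp sc Bd d m j r \<in> spanF (tens2 (SymP sc Bd d j) (SymP sc Bd d (m - j)))"
  using assms
proof (induction r)
  case Nil
  then show ?case by (simp add: Dcomp_Nil spanF_zero)
next
  case (Cons x r)
  obtain c ws where x: "x = (c, ws)" by fastforce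
  with Cons.prems have ws: "length ws = m" "set ws \<subseteq> Bd d" and r: "valid Bd d m r"
    by (auto simp: valid_Cons)
  define G where "G S = (\<lambda>(\<phi>, \<psi>). symel sc Bd d [(c, subword ws S)] \<phi> * symel sc Bd d [(1, subword ws ({..<m} - S))] \<psi>)" for S
  have "G S \<in> tens2 (SymP sc Bd d j) (SymP sc Bd d (m - j))" if "S \<subseteq> {..<m} \<and> card S = j" for S
  proof -
    have "finite S" using that finite_subset by blast
    with that ws have "valid Bd d j [(c, subword ws S)]" "valid Bd d (m - j) [(1, subword ws ({..<m} - S))]"
      by (auto simp: valid_def subword_def subset_iff card_Diff_subset)
    then show ?thesis unfolding G_def by (intro tens2_I SymP_I)
  qed
  then have "(\<lambda>z. \<Sum>S | S \<subseteq> {..<m} \<and> card S = j. G S z) \<in> spanF (tens2 (SymP sc Bd d j) (SymP sc Bd d (m - j)))"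
    by (intro spanF_sum spanF_base) simp
  moreover have "Dcomp sc Bd d m j [x] = (\<lambda>z. \<Sum>S | S \<subseteq> {..<m} \<and> card S = j. G S z)"
    by (auto simp: x G_def Dcomp_single_eq_sum)
  ultimately show ?case
    using spanF_add[OF _ Cons.IH[OF r]] Dcomp_append[of sc Bd d m j "[x]" r] by simp
qed

section \<open>The join is an ideal\<close>

abbreviation join_gens where
  "join_gens sc Bd I J d n i \<equiv>
     tens2 (I d i) (SymP sc Bd d (n - i)) \<union> tens2 (SymP sc Bd d i) (J d (n - i))"

lemma join_SymP: "x \<in> join sc Bd I J d n \<Longrightarrow> x \<in> SymP sc Bd d n"
  by (auto simp: join_def)

lemma joinD:
  "x \<in> join sc Bd I J d n \<Longrightarrow> valid Bd d n r \<Longrightarrow> symel sc Bd d r = x \<Longrightarrow> i \<le> n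
    \<Longrightarrow> Dcomp sc Bd d n i r \<in> spanF (join_gens sc Bd I J d n i)"
  by (auto simp: join_def)

lemma joinI:
  assumes "valid Bd d n r"
    and "\<And>i. i \<le> n \<Longrightarrow> Dcomp sc Bd d n i r \<in> spanF (join_gens sc Bd I J d n i)"
  shows "symel sc Bd d r \<in> join sc Bd I J d n"
  unfolding join_def
proof (intro CollectI conjI allI impI)
  show "symel sc Bd d r \<in> SymP sc Bd d n" using assms(1) by (rule SymP_I)
  fix r' i
  assume "valid Bd d n r'" "symel sc Bd d r' = symel sc Bd d r" "i \<le> n"
  then show "Dcomp sc Bd d n i r' \<in> spanF (join_gens sc Bd I J d n i)"
    using Dcomp_eq_if_symel_eq[of Bd d n r' r sc i] assms by simp
qed

lemma join_zero: "(\<lambda>_. 0) \<in> join sc Bd I J d n"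
proof -
  have "symel sc Bd d [] \<in> join sc Bd I J d n"
    by (rule joinI[OF valid_Nil]) (simp add: Dcomp_Nil spanF_zero)
  then show ?thesis by (simp add: symel_Nil)
qed

lemma join_add:
  assumes "x \<in> join sc Bd I J d n" "y \<in> join sc Bd I J d n"
  shows "(\<lambda>\<phi>. x \<phi> + y \<phi>) \<in> join sc Bd I J d n"
proof -
  obtain rx ry where rx: "valid Bd d n rx" "x = symel sc Bd d rx" and ry: "valid Bd d n ry" "y = symel sc Bd d ry"
    using assms join_SymP by (metis SymP_E)
  have "symel sc Bd d (rx @ ry) \<in> join sc Bd I J d n"
  proof (rule joinI)
    fix i assume "i \<le> n"
    then show "Dcomp sc Bd d n i (rx @ ry) \<in> spanF (join_gens sc Bd I J d n i)"
      using spanF_add[OF joinD[OF assms(1) rx(1) rx(2)[symmetric]] joinD[OF assms(2) ry(1) ry(2)[symmetric]]]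
      by (simp add: Dcomp_append[abs_def])
  qed (use rx ry in \<open>simp add: valid_append\<close>)
  then show ?thesis using rx ry by (simp add: symel_append[abs_def])
qed

lemma join_scale:
  assumes "x \<in> join sc Bd I J d n"
  shows "(\<lambda>\<phi>. c * x \<phi>) \<in> join sc Bd I J d n"
proof -
  obtain rx where rx: "valid Bd d n rx" "x = symel sc Bd d rx"
    using assms join_SymP by (metis SymP_E)
  have "symel sc Bd d (rscale c rx) \<in> join sc Bd I J d n"
  proof (rule joinI)
    fix i assume "i \<le> n"
    then show "Dcomp sc Bd d n i (rscale c rx) \<in> spanF (join_gens sc Bd I J d n i)"
      using spanF_scale[OF joinD[OF assms rx(1) rx(2)[symmetric]]] by (simp add: Dcomp_rscale[abs_def])
  qed (use rx in \<open>simp add: valid_rscale\<close>)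
  then show ?thesis using rx by (simp add: symel_rscale[abs_def])
qed

lemma join_sum_list:
  assumes "\<And>x. x \<in> set xs \<Longrightarrow> f x \<in> join sc Bd I J d n"
  shows "(\<lambda>\<phi>. \<Sum>x\<leftarrow>xs. f x \<phi>) \<in> join sc Bd I J d n"
  using assms
proof (induction xs)
  case Nil
  then show ?case using join_zero by simp
next
  case (Cons x xs)
  then show ?case using join_add[of "f x" sc Bd I J d n "\<lambda>\<phi>. \<Sum>x\<leftarrow>xs. f x \<phi>"] by simp
qed

lemma is_ideal_subset_SymP: "is_ideal sc Bd I \<Longrightarrow> x \<in> I d n \<Longrightarrow> x \<in> SymP sc Bd d n"
  unfolding is_ideal_def by blast

lemma is_ideal_mult:
  "is_ideal sc Bd I \<Longrightarrow> x \<in> I d n \<Longrightarrow> y \<in> SymP sc Bd d m \<Longrightarrow> (\<lambda>\<phi>. y \<phi> * x \<phi>) \<in> I d (m + n)"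
  unfolding is_ideal_def by blast

lemma join_gens_mult:
  assumes I: "is_ideal sc Bd I" and J: "is_ideal sc Bd J"
    and a: "a \<in> tens2 (SymP sc Bd d j) (SymP sc Bd d (m - j))" and b: "b \<in> join_gens sc Bd I J d n (i - j)"
    and "j \<le> i" "j \<le> m" "i - j \<le> n"
  shows "(\<lambda>z. a z * b z) \<in> spanF (join_gens sc Bd I J d (m + n) i)"
proof -
  from a obtain a1 a2 where a12: "a = (\<lambda>(\<phi>, \<psi>). a1 \<phi> * a2 \<psi>)" "a1 \<in> SymP sc Bd d j" "a2 \<in> SymP sc Bd d (m - j)"
    by (auto simp: tens2_def)
  from b obtain b1 b2 where b12: "b = (\<lambda>(\<phi>, \<psi>). b1 \<phi> * b2 \<psi>)"
    and cases: "b1 \<in> I d (i - j) \<and> b2 \<in> SymP sc Bd d (n - (i - j)) \<or> b1 \<in> SymP sc Bd d (i - j) \<and> b2 \<in> J d (n - (i - j))"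
    by (auto simp: tens2_def)
  have prod: "(\<lambda>z. a z * b z) = (\<lambda>(\<phi>, \<psi>). (\<lambda>\<phi>. a1 \<phi> * b1 \<phi>) \<phi> * (\<lambda>\<psi>. a2 \<psi> * b2 \<psi>) \<psi>)"
    by (auto simp: a12 b12 fun_eq_iff algebra_simps)
  have deg: "j + (i - j) = i" "m - j + (n - (i - j)) = m + n - i"
    using assms(5-7) by auto
  from cases show ?thesis
  proof
    assume b1: "b1 \<in> I d (i - j) \<and> b2 \<in> SymP sc Bd d (n - (i - j))"
    have "(\<lambda>\<phi>. a1 \<phi> * b1 \<phi>) \<in> I d i"
      using is_ideal_mult[OF I conjunct1[OF b1] a12(2)] by (simp add: deg)
    moreover have "(\<lambda>\<psi>. a2 \<psi> * b2 \<psi>) \<in> SymP sc Bd d (m + n - i)"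
      using SymP_mult[OF a12(3) conjunct2[OF b1]] by (simp add: deg)
    ultimately show ?thesis unfolding prod by (intro spanF_base UnI1 tens2_I)
  next
    assume b2: "b1 \<in> SymP sc Bd d (i - j) \<and> b2 \<in> J d (n - (i - j))"
    have "(\<lambda>\<phi>. a1 \<phi> * b1 \<phi>) \<in> SymP sc Bd d i"
      using SymP_mult[OF a12(2) conjunct1[OF b2]] by (simp add: deg)
    moreover have "(\<lambda>\<psi>. a2 \<psi> * b2 \<psi>) \<in> J d (m + n - i)"
      using is_ideal_mult[OF J conjunct2[OF b2] a12(3)] by (simp add: deg)
    ultimately show ?thesis unfolding prod by (intro spanF_base UnI2 tens2_I)
  qed
qed

lemma join_mult:
  assumes I: "is_ideal sc Bd I" and J: "is_ideal sc Bd J"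
    and y: "y \<in> SymP sc Bd d m" and x: "x \<in> join sc Bd I J d n"
  shows "(\<lambda>\<phi>. y \<phi> * x \<phi>) \<in> join sc Bd I J d (m + n)"
proof -
  obtain rx where rx: "valid Bd d n rx" "x = symel sc Bd d rx"
    using x join_SymP by (metis SymP_E)
  obtain ry where ry: "valid Bd d m ry" "y = symel sc Bd d ry"
    using y by (metis SymP_E)
  have "symel sc Bd d (rmul ry rx) \<in> join sc Bd I J d (m + n)"
  proof (rule joinI)
    fix i assume "i \<le> m + n"
    have "(\<lambda>z. Dcomp sc Bd d m j ry z * Dcomp sc Bd d n (i - j) rx z) \<in> spanF (join_gens sc Bd I J d (m + n) i)"
      if "j \<le> i" for j
    proof (cases "j \<le> m \<and> i - j \<le> n")
      case True
      show ?thesis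
      proof (rule spanF_mult[OF Dcomp_in_spanF_tens2_SymP[OF ry(1)] joinD[OF x rx(1) rx(2)[symmetric]]])
        show "i - j \<le> n" using True by simp
        fix a b
        assume "a \<in> tens2 (SymP sc Bd d j) (SymP sc Bd d (m - j))" "b \<in> join_gens sc Bd I J d n (i - j)"
        from join_gens_mult[OF I J this \<open>j \<le> i\<close>] True
        show "(\<lambda>z. a z * b z) \<in> spanF (join_gens sc Bd I J d (m + n) i)" by simp
      qed
    next
      case False
      then have "Dcomp sc Bd d m j ry = (\<lambda>_. 0) \<or> Dcomp sc Bd d n (i - j) rx = (\<lambda>_. 0)"
        using Dcomp_eq_0_if_gt by (metis not_le)
      then show ?thesis
        using spanF_zero by auto
    qed
    then show "Dcomp sc Bd d (m + n) i (rmul ry rx) \<in> spanF (join_gens sc Bd I J d (m + n) i)"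
      unfolding Dcomp_rmul[OF ry(1) rx(1), abs_def] by (intro spanF_sum) simp
  qed (use rx ry in \<open>simp add: valid_rmul\<close>)
  then show ?thesis using rx ry by (simp add: symel_rmul[abs_def])
qed

lemma join_is_ideal:
  assumes "is_ideal sc Bd I" "is_ideal sc Bd J"
  shows "is_ideal sc Bd (join sc Bd I J)"
  unfolding is_ideal_def
proof (intro allI conjI ballI subsetI)
  fix d n
  show "x \<in> SymP sc Bd d n" if "x \<in> join sc Bd I J d n" for x
    using that by (rule join_SymP)
  show "(\<lambda>_. 0) \<in> join sc Bd I J d n"
    by (rule join_zero)
  show "(\<lambda>\<phi>. x \<phi> + y \<phi>) \<in> join sc Bd I J d n" if "x \<in> join sc Bd I J d n" "y \<in> join sc Bd I J d n" for x y
    using that by (rule join_add)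
  show "(\<lambda>\<phi>. c * x \<phi>) \<in> join sc Bd I J d n" if "x \<in> join sc Bd I J d n" for c x
    using that by (rule join_scale)
  show "(\<lambda>\<phi>. y \<phi> * x \<phi>) \<in> join sc Bd I J d (m + n)" if "x \<in> join sc Bd I J d n" "y \<in> SymP sc Bd d m" for m x y
    using join_mult[OF assms that(2,1)] .
qed

lemma graded_scale_mult: "std_graded_algebra sc Bd \<Longrightarrow> sc c (a * b) = sc c a * b"
  by (simp add: std_graded_algebra_def)

lemma graded_mult_closed: "std_graded_algebra sc Bd \<Longrightarrow> a \<in> Bd d \<Longrightarrow> b \<in> Bd e \<Longrightarrow> a * b \<in> Bd (d + e)"
  by (simp add: std_graded_algebra_def)

lemma graded_piece_subspace: "std_graded_algebra sc Bd \<Longrightarrow> module.subspace sc (Bd d)"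
  by (simp add: std_graded_algebra_def)

lemma graded_module: "std_graded_algebra sc Bd \<Longrightarrow> module sc"
  unfolding std_graded_algebra_def vector_space_def module_def by auto

lemma graded_piece_zero: "std_graded_algebra sc Bd \<Longrightarrow> 0 \<in> Bd d"
  using module.subspace_0[OF graded_module graded_piece_subspace] by blast

lemma graded_piece_add: "std_graded_algebra sc Bd \<Longrightarrow> x \<in> Bd d \<Longrightarrow> y \<in> Bd d \<Longrightarrow> x + y \<in> Bd d"
  using module.subspace_add[OF graded_module graded_piece_subspace] by blast

lemma graded_piece_sum:
  assumes "std_graded_algebra sc Bd" "\<And>j. j \<in> T \<Longrightarrow> f j \<in> Bd d"
  shows "(\<Sum>j\<in>T. f j) \<in> Bd d"
  using assms(2)
  by (induction T rule: infinite_finite_induct)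
    (simp_all add: graded_piece_zero[OF assms(1)] graded_piece_add[OF assms(1)])

lemma Dual_add: "\<phi> \<in> Dual sc Bd d \<Longrightarrow> x \<in> Bd d \<Longrightarrow> y \<in> Bd d \<Longrightarrow> \<phi> (x + y) = \<phi> x + \<phi> y"
  by (simp add: Dual_def)

lemma Dual_scale: "\<phi> \<in> Dual sc Bd d \<Longrightarrow> x \<in> Bd d \<Longrightarrow> \<phi> (sc c x) = c * \<phi> x"
  by (simp add: Dual_def)

lemma Dual_zero:
  assumes "std_graded_algebra sc Bd" "\<phi> \<in> Dual sc Bd d"
  shows "\<phi> 0 = 0"
  using Dual_add[OF assms(2) graded_piece_zero[OF assms(1)] graded_piece_zero[OF assms(1)]] by simp

lemma Dual_sum:
  assumes "std_graded_algebra sc Bd" "\<phi> \<in> Dual sc Bd d" "\<And>j. j \<in> T \<Longrightarrow> f j \<in> Bd d"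
  shows "\<phi> (\<Sum>j\<in>T. f j) = (\<Sum>j\<in>T. \<phi> (f j))"
  using assms(3)
proof (induction T rule: infinite_finite_induct)
  case (insert x F)
  then show ?case
    using Dual_add[OF assms(2)] graded_piece_sum[OF assms(1), of F f] by simp
qed (simp_all add: Dual_zero[OF assms(1,2)])

lemma Dual_mult_left:
  assumes SGA: "std_graded_algebra sc Bd" and \<phi>: "\<phi> \<in> Dual sc Bd (e + d)" and u: "u \<in> Bd e"
  shows "(\<lambda>x. \<phi> (u * x)) \<in> Dual sc Bd d"
  unfolding Dual_def
proof (intro CollectI conjI ballI allI)
  fix x y assume x: "x \<in> Bd d" and y: "y \<in> Bd d"
  show "\<phi> (u * (x + y)) = \<phi> (u * x) + \<phi> (u * y)"
    using Dual_add[OF \<phi> graded_mult_closed[OF SGA u x] graded_mult_closed[OF SGA u y]]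
    by (simp add: distrib_left)
next
  fix c x assume x: "x \<in> Bd d"
  have "u * sc c x = sc c (u * x)"
    using graded_scale_mult[OF SGA, of c x u] by (simp add: mult.commute)
  then show "\<phi> (u * sc c x) = c * \<phi> (u * x)"
    using Dual_scale[OF \<phi> graded_mult_closed[OF SGA u x]] by simp
qed

lemma Dual_mult_right:
  assumes "std_graded_algebra sc Bd" "\<phi> \<in> Dual sc Bd (e + d)" "v \<in> Bd d"
  shows "(\<lambda>x. \<phi> (x * v)) \<in> Dual sc Bd e"
  using Dual_mult_left[OF assms(1) _ assms(3), of \<phi> e] assms(2) by (simp add: add.commute mult.commute)

section \<open>Ryser's formula for the permanent\<close>

lemma bij_betw_restrict_permutes:
  assumes "finite N"
  shows "bij_betw (\<lambda>\<tau>. restrict \<tau> N) {\<tau>. \<tau> permutes N} {h \<in> PiE N (\<lambda>_. N). h ` N = N}"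
proof (rule bij_betwI')
  fix x y assume "x \<in> {\<tau>. \<tau> permutes N}" "y \<in> {\<tau>. \<tau> permutes N}"
  then have x: "x permutes N" and y: "y permutes N" by auto
  show "(restrict x N = restrict y N) = (x = y)"
  proof
    assume eq: "restrict x N = restrict y N"
    show "x = y"
    proof
      fix z
      show "x z = y z"
        using fun_cong[OF eq, of z] permutes_not_in[OF x, of z] permutes_not_in[OF y, of z]
        by (cases "z \<in> N") auto
    qed
  qed simp
next
  fix x assume "x \<in> {\<tau>. \<tau> permutes N}"
  then have x: "x permutes N" by simp
  show "restrict x N \<in> {h \<in> PiE N (\<lambda>_. N). h ` N = N}"
    using permutes_in_image[OF x] permutes_image[OF x] by auto
next
  fix h assume h: "h \<in> {h \<in> PiE N (\<lambda>_. N). h ` N = N}"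
  define \<tau> where "\<tau> x = (if x \<in> N then h x else x)" for x
  have "inj_on h N"
    using h assms by (metis (mono_tags, lifting) eq_card_imp_inj_on mem_Collect_eq)
  then have "bij_betw h N N"
    using h by (simp add: bij_betw_def)
  then have "bij_betw \<tau> N N"
    by (rule bij_betw_cong[THEN iffD1, rotated]) (simp add: \<tau>_def)
  then have "\<tau> permutes N"
    by (rule bij_imp_permutes) (simp add: \<tau>_def)
  moreover have "restrict \<tau> N = h"
    using h by (auto simp: \<tau>_def fun_eq_iff PiE_def extensional_def)
  ultimately show "\<exists>x\<in>{\<tau>. \<tau> permutes N}. h = restrict x N" by blast
qed

lemma permanent_inclusion_exclusion:
  fixes a :: "nat \<Rightarrow> nat \<Rightarrow> 'k::comm_ring_1"
  shows "(\<Sum>\<tau> | \<tau> permutes {..<n}. \<Prod>i<n. a i (\<tau> i))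
       = (\<Sum>T\<in>Pow {..<n}. (-1) ^ (n - card T) * (\<Prod>i<n. \<Sum>j\<in>T. a i j))"
proof -
  define N where "N = {..<n}"
  have N: "finite N" "card N = n" by (simp_all add: N_def)
  define F where "F h = (\<Prod>i\<in>N. a i (h i))" for h
  define onto where "onto S = (\<Sum>h | h \<in> PiE N (\<lambda>_. S) \<and> h ` N = S. F h)" for S
  have into: "(\<Sum>h\<in>PiE N (\<lambda>_. S). F h) = sum onto (Pow S)" if "finite S" for S
  proof -
    have "sum onto (Pow S) = (\<Sum>U\<in>Pow S. \<Sum>h | h \<in> PiE N (\<lambda>_. S) \<and> h ` N = U. F h)"
      by (intro sum.cong refl) (auto simp: onto_def PiE_def Pi_def intro!: sum.cong)
    also have "\<dots> = (\<Sum>h\<in>PiE N (\<lambda>_. S). F h)"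
    proof (rule sum.group)
      show "finite (PiE N (\<lambda>_. S))" using N that by (intro finite_PiE) auto
    qed (use that in \<open>auto simp: PiE_def Pi_def\<close>)
    finally show ?thesis ..
  qed
  have "(\<Sum>\<tau> | \<tau> permutes N. F (restrict \<tau> N)) = onto N"
    unfolding onto_def by (rule sum.reindex_bij_betw[OF bij_betw_restrict_permutes[OF N(1)]])
  also have "\<dots> = (\<Sum>T\<in>Pow N. (-1) ^ (card N - card T) * (\<Sum>h\<in>PiE N (\<lambda>_. T). F h))"
    by (rule inclusion_exclusion_mobius[OF into N(1)])
  also have "\<dots> = (\<Sum>T\<in>Pow N. (-1) ^ (n - card T) * (\<Prod>i\<in>N. \<Sum>j\<in>T. a i j))"
  proof (intro sum.cong refl)
    fix T assume "T \<in> Pow N"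
    then have "finite T" using N(1) finite_subset by blast
    then show "(-1) ^ (card N - card T) * (\<Sum>h\<in>PiE N (\<lambda>_. T). F h)
        = (-1) ^ (n - card T) * (\<Prod>i\<in>N. \<Sum>j\<in>T. a i j)"
      using N by (simp add: F_def prod_sum_PiE)
  qed
  finally show ?thesis by (simp add: F_def N_def)
qed

lemma Dual_polarisation:
  assumes "std_graded_algebra sc Bd"
    and "length \<phi>s = n" "set \<phi>s \<subseteq> Dual sc Bd e" "length us = n" "set us \<subseteq> Bd e"
  shows "(\<Sum>\<tau> | \<tau> permutes {..<n}. \<Prod>i<n. (\<phi>s ! i) (us ! \<tau> i))
       = (\<Sum>T\<in>Pow {..<n}. (-1) ^ (n - card T) * (\<Prod>i<n. (\<phi>s ! i) (\<Sum>j\<in>T. us ! j)))"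
proof -
  have "(\<phi>s ! i) (\<Sum>j\<in>T. us ! j) = (\<Sum>j\<in>T. (\<phi>s ! i) (us ! j))" if "i < n" "T \<subseteq> {..<n}" for i T
  proof (rule Dual_sum[OF assms(1)])
    show "\<phi>s ! i \<in> Dual sc Bd e" using that assms(2,3) nth_mem by blast
    show "us ! j \<in> Bd e" if "j \<in> T" for j using that \<open>T \<subseteq> {..<n}\<close> assms(4,5) nth_mem by blast
  qed
  then show ?thesis
    using permanent_inclusion_exclusion[of "\<lambda>i j. (\<phi>s ! i) (us ! j)" n] by simp
qed

lemma tensel_outside: "\<not> (length \<phi>s = n \<and> set \<phi>s \<subseteq> Dual sc Bd d) \<Longrightarrow> tensel sc Bd d n r \<phi>s = 0"
  unfolding tensel_def by (rule if_not_P)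

lemma tensel_append: "tensel sc Bd d n (r1 @ r2) \<phi>s = tensel sc Bd d n r1 \<phi>s + tensel sc Bd d n r2 \<phi>s"
  by (simp add: tensel_def)

lemma tensel_rscale: "tensel sc Bd d n (rscale a r) \<phi>s = a * tensel sc Bd d n r \<phi>s"
  by (induction r) (auto simp: tensel_def rscale_def algebra_simps)

lemma tensel_powers:
  assumes "length \<phi>s = n" "set \<phi>s \<subseteq> Dual sc Bd e"
  shows "tensel sc Bd e n (map (\<lambda>(a, u). (a, replicate n u)) R) \<phi>s = (\<Sum>(a, u)\<leftarrow>R. a * (\<Prod>i<n. (\<phi>s ! i) u))"
  using assms by (induction R) (auto simp: tensel_def)

lemma valid_powers: "(\<And>x. x \<in> set R \<Longrightarrow> snd x \<in> Bd e) \<Longrightarrow> valid Bd e n (map (\<lambda>(a, u). (a, replicate n u)) R)"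
  by (auto simp: valid_def)

lemma tprod_Cons: "tprod (x # rg) rf = tprod [x] rf @ tprod rg rf"
  by (simp add: tprod_def)

lemma tprod_single_eq_rscale:
  fixes c :: "'k::monoid_mult"
  shows "tprod [(c, us)] rf = rscale c (tprod [(1, us)] rf)"
  by (induction rf) (auto simp: tprod_def rscale_def)

lemma tensel_tprod:
  assumes "valid Bd e n rg" "valid Bd d n rf" "length \<phi>s = n" "set \<phi>s \<subseteq> Dual sc Bd (e + d)"
  shows "tensel sc Bd (e + d) n (tprod rg rf) \<phi>s =
    (\<Sum>x\<leftarrow>rg. \<Sum>y\<leftarrow>rf. fst x * fst y * (\<Prod>i<n. (\<phi>s ! i) (snd x ! i * snd y ! i)))"
proof -
  have "(\<Sum>(c'', ws)\<leftarrow>map (\<lambda>(c', vs). (c * c', map2 (*) us vs)) rf'. c'' * (\<Prod>i<n. (\<phi>s ! i) (ws ! i)))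
     = (\<Sum>y\<leftarrow>rf'. c * fst y * (\<Prod>i<n. (\<phi>s ! i) (us ! i * snd y ! i)))"
    if "length us = n" "valid Bd d n rf'" for c us rf'
    using that(2) by (induction rf') (auto simp: valid_Cons that(1) intro!: prod.cong)
  then have "(\<Sum>(c, ws)\<leftarrow>tprod rg' rf. c * (\<Prod>i<n. (\<phi>s ! i) (ws ! i))) =
      (\<Sum>x\<leftarrow>rg'. \<Sum>y\<leftarrow>rf. fst x * fst y * (\<Prod>i<n. (\<phi>s ! i) (snd x ! i * snd y ! i)))"
    if "valid Bd e n rg'" for rg'
    using that assms(2) by (induction rg') (auto simp: tprod_def valid_Cons)
  then show ?thesis using assms by (simp add: tensel_def)
qed

lemma tensel_tprod_replicate:
  assumes SGA: "std_graded_algebra sc Bd" and u: "u \<in> Bd e" and rf: "valid Bd d n rf"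
    and \<phi>s: "length \<phi>s = n" "set \<phi>s \<subseteq> Dual sc Bd (e + d)"
  shows "tensel sc Bd (e + d) n (tprod [(1, replicate n u)] rf) \<phi>s
    = tensel sc Bd d n rf (map (\<lambda>\<psi> x. \<psi> (u * x)) \<phi>s)"
proof -
  have pow: "valid Bd e n [(1, replicate n u)]" using u by (auto simp: valid_def)
  have "tensel sc Bd (e + d) n (tprod [(1, replicate n u)] rf) \<phi>s
      = (\<Sum>y\<leftarrow>rf. fst y * (\<Prod>i<n. (\<phi>s ! i) (u * snd y ! i)))"
    using tensel_tprod[OF pow rf \<phi>s] by simp
  also have "\<dots> = tensel sc Bd d n rf (map (\<lambda>\<psi> x. \<psi> (u * x)) \<phi>s)"
  proof -
    have "set (map (\<lambda>\<psi> x. \<psi> (u * x)) \<phi>s) \<subseteq> Dual sc Bd d"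
      using \<phi>s Dual_mult_left[OF SGA _ u] by auto
    then show ?thesis using \<phi>s by (simp add: tensel_def split_def)
  qed
  finally show ?thesis .
qed

lemma tensel_tprod_eq_sum_right:
  assumes SGA: "std_graded_algebra sc Bd" and "valid Bd e n rg" and rf: "valid Bd d n rf"
    and \<phi>s: "length \<phi>s = n" "set \<phi>s \<subseteq> Dual sc Bd (e + d)"
  shows "tensel sc Bd (e + d) n (tprod rg rf) \<phi>s
    = (\<Sum>y\<leftarrow>rf. fst y * tensel sc Bd e n rg (map (\<lambda>j x. (\<phi>s ! j) (x * snd y ! j)) [0..<n]))"
proof -
  have inner: "(\<Sum>x\<leftarrow>rg. fst x * fst y * (\<Prod>i<n. (\<phi>s ! i) (snd x ! i * snd y ! i)))
      = fst y * tensel sc Bd e n rg (map (\<lambda>j x. (\<phi>s ! j) (x * snd y ! j)) [0..<n])"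
    if "y \<in> set rf" for y
  proof -
    have vs: "length (snd y) = n" "set (snd y) \<subseteq> Bd d"
      using that rf by (auto simp: valid_def split_def)
    have "(\<lambda>x. (\<phi>s ! j) (x * snd y ! j)) \<in> Dual sc Bd e" if "j < n" for j
    proof (rule Dual_mult_right[OF SGA])
      show "\<phi>s ! j \<in> Dual sc Bd (e + d)" using that \<phi>s nth_mem[of j \<phi>s] by auto
      show "snd y ! j \<in> Bd d" using that vs nth_mem[of j "snd y"] by auto
    qed
    then have "set (map (\<lambda>j x. (\<phi>s ! j) (x * snd y ! j)) [0..<n]) \<subseteq> Dual sc Bd e"
      by auto
    then have "tensel sc Bd e n rg (map (\<lambda>j x. (\<phi>s ! j) (x * snd y ! j)) [0..<n])
        = (\<Sum>x\<leftarrow>rg. fst x * (\<Prod>i<n. (\<phi>s ! i) (snd x ! i * snd y ! i)))"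
      by (simp add: tensel_def split_def)
    moreover have "(\<Sum>x\<leftarrow>rg. fst x * fst y * P x) = fst y * (\<Sum>x\<leftarrow>rg. fst x * P x)" for P
      by (induction rg) (simp_all add: algebra_simps)
    ultimately show ?thesis by simp
  qed
  have "tensel sc Bd (e + d) n (tprod rg rf) \<phi>s
      = (\<Sum>y\<leftarrow>rf. \<Sum>x\<leftarrow>rg. fst x * fst y * (\<Prod>i<n. (\<phi>s ! i) (snd x ! i * snd y ! i)))"
    unfolding tensel_tprod[OF assms(2) rf \<phi>s] by (rule sum_list_swap)
  also have "\<dots> = (\<Sum>y\<leftarrow>rf. fst y * tensel sc Bd e n rg (map (\<lambda>j x. (\<phi>s ! j) (x * snd y ! j)) [0..<n]))"
    using inner by (intro arg_cong[where f = sum_list] map_cong refl)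
  finally show ?thesis .
qed

lemma tensel_tprod_cong_left:
  assumes "std_graded_algebra sc Bd" "valid Bd e n rg" "valid Bd e n rg'" "valid Bd d n rf"
    and "tensel sc Bd e n rg = tensel sc Bd e n rg'"
  shows "tensel sc Bd (e + d) n (tprod rg rf) = tensel sc Bd (e + d) n (tprod rg' rf)"
proof (rule ext)
  fix \<phi>s
  show "tensel sc Bd (e + d) n (tprod rg rf) \<phi>s = tensel sc Bd (e + d) n (tprod rg' rf) \<phi>s"
  proof (cases "length \<phi>s = n \<and> set \<phi>s \<subseteq> Dual sc Bd (e + d)")
    case True
    then show ?thesis
      using tensel_tprod_eq_sum_right[OF assms(1,2,4)] tensel_tprod_eq_sum_right[OF assms(1,3,4)] assms(5)
      by simp
  next
    case False
    then show ?thesis by (simp only: tensel_outside[OF False])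
  qed
qed

lemma tensel_tprod_powers:
  "tensel sc Bd d n (tprod (map (\<lambda>(a, u). (a, replicate n u)) R) rf) \<phi>s
    = (\<Sum>x\<leftarrow>R. fst x * tensel sc Bd d n (tprod [(1, replicate n (snd x))] rf) \<phi>s)"
proof (induction R)
  case Nil
  then show ?case by (simp add: tprod_def tensel_def)
next
  case (Cons x R)
  have "tprod [(fst x, replicate n (snd x))] rf = rscale (fst x) (tprod [(1, replicate n (snd x))] rf)"
    by (rule tprod_single_eq_rscale)
  with Cons show ?case
    by (simp add: tprod_Cons[of _ "map _ R"] tensel_append tensel_rscale split_def)
qed

lemma Simg_outside: "\<not> (length \<phi>s = n \<and> set \<phi>s \<subseteq> Dual sc Bd d) \<Longrightarrow> Simg sc Bd d n r \<phi>s = 0"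
  unfolding Simg_def by (rule if_not_P)

lemma Simg_append: "Simg sc Bd d n (r1 @ r2) \<phi>s = Simg sc Bd d n r1 \<phi>s + Simg sc Bd d n r2 \<phi>s"
  by (simp add: Simg_def)

lemma Simg_concat: "Simg sc Bd d n (concat (map G xs)) \<phi>s = (\<Sum>x\<leftarrow>xs. Simg sc Bd d n (G x) \<phi>s)"
  by (induction xs) (simp_all add: Simg_append, simp add: Simg_def)

lemma Simg_rscale: "Simg sc Bd d n (rscale a r) \<phi>s = a * Simg sc Bd d n r \<phi>s"
  by (induction r) (auto simp: Simg_def rscale_def algebra_simps)

lemma Simg_eq_tensel:
  fixes p :: "('k::field_char_0 \<times> 'b::comm_ring_1 list) list"
  assumes "valid Bd d n p"
  shows "\<exists>r. valid Bd d n r \<and> tensel sc Bd d n r = Simg sc Bd d n p"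
proof -
  obtain \<tau>s where \<tau>s: "set \<tau>s = {\<tau>. \<tau> permutes {..<n}}" "distinct \<tau>s"
    using finite_distinct_list[OF finite_permutations[of "{..<n}"]] by blast
  define perms where "perms x = map (\<lambda>\<tau>. (fst x, map (\<lambda>j. snd x ! \<tau> j) [0..<n])) \<tau>s" for x :: "'k \<times> 'b list"
  have "valid Bd d n (perms x)" if "x \<in> set p" for x
  proof -
    have "length (snd x) = n" "set (snd x) \<subseteq> Bd d"
      using assms that by (auto simp: valid_def split_def)
    moreover have "\<tau> j < n" if "\<tau> \<in> set \<tau>s" "j < n" for \<tau> j
      using that \<tau>s(1) permutes_in_image[of \<tau> "{..<n}" j] by auto
    ultimately show ?thesis by (auto simp: valid_def perms_def)
  qed
  then have "valid Bd d n (concat (map perms p))"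
    by (rule valid_concat)
  moreover have "tensel sc Bd d n (concat (map perms p)) = Simg sc Bd d n p"
  proof (rule ext)
    fix \<phi>s
    have perm_sum: "(\<Sum>(c, ws)\<leftarrow>perms x. c * (\<Prod>i<n. (\<phi>s ! i) (ws ! i)))
        = fst x * (\<Sum>\<tau> | \<tau> permutes {..<n}. \<Prod>i<n. (\<phi>s ! i) (snd x ! \<tau> i))" for x
      using \<tau>s by (simp add: perms_def comp_def sum_list_distinct_conv_sum_set sum_distrib_left split_def)
    show "tensel sc Bd d n (concat (map perms p)) \<phi>s = Simg sc Bd d n p \<phi>s"
    proof (cases "length \<phi>s = n \<and> set \<phi>s \<subseteq> Dual sc Bd d")
      case True
      with perm_sum show ?thesis by (simp add: tensel_def Simg_def split_def sum_list_map_concat)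
    next
      case False
      then show ?thesis by (simp only: tensel_outside[OF False] Simg_outside[OF False])
    qed
  qed
  ultimately show ?thesis by blast
qed

lemma Simg_replicate:
  assumes "valid Bd d n r" "\<phi> \<in> Dual sc Bd d"
  shows "Simg sc Bd d n r (replicate n \<phi>) = fact n * symel sc Bd d r \<phi>"
proof -
  have "(\<Sum>\<tau> | \<tau> permutes {..<n}. \<Prod>i<n. \<phi> (ws ! \<tau> i)) = fact n * prod_list (map \<phi> ws)"
    if "length ws = n" for ws
  proof -
    have "(\<Prod>i<n. \<phi> (ws ! \<tau> i)) = prod_list (map \<phi> ws)" if "\<tau> permutes {..<n}" for \<tau>
    proof -
      have "(\<Prod>i<n. \<phi> (ws ! \<tau> i)) = (\<Prod>j<n. \<phi> (ws ! j))"
        using prod.reindex_bij_betw[OF permutes_imp_bij[OF that], of "\<lambda>j. \<phi> (ws ! j)"] by simp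
      also have "\<dots> = prod_list (map \<phi> ws)"
        by (rule prod_list_map_conv_prod_lessThan[symmetric]) fact
      finally show ?thesis .
    qed
    then show ?thesis by (simp add: card_permutations)
  qed
  then have "(\<Sum>(c, ws)\<leftarrow>r. c * (\<Sum>\<tau> | \<tau> permutes {..<n}. \<Prod>i<n. \<phi> (ws ! \<tau> i)))
      = fact n * (\<Sum>(c, ws)\<leftarrow>r. c * prod_list (map \<phi> ws))"
    using assms(1)
    by (induction r) (auto simp: valid_Cons algebra_simps)
  then show ?thesis
    using assms(2) by (simp add: Simg_def symel_def set_replicate_conv_if)
qed

lemma symel_eq_if_Simg_eq:
  fixes sc :: "'k::field_char_0 \<Rightarrow> 'b::comm_ring_1 \<Rightarrow> 'b"
  assumes "valid Bd d n r1" "valid Bd d n r2" "Simg sc Bd d n r1 = Simg sc Bd d n r2"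
  shows "symel sc Bd d r1 = symel sc Bd d r2"
proof
  fix \<phi>
  show "symel sc Bd d r1 \<phi> = symel sc Bd d r2 \<phi>"
  proof (cases "\<phi> \<in> Dual sc Bd d")
    case True
    then have "fact n * symel sc Bd d r1 \<phi> = (fact n * symel sc Bd d r2 \<phi> :: 'k)"
      using Simg_replicate[OF assms(1) True] Simg_replicate[OF assms(2) True] assms(3) by simp
    then show ?thesis by simp
  next
    case False
    then show ?thesis by (simp add: symel_def)
  qed
qed

section \<open>Symmetric tensors are combinations of pure powers\<close>

definition symmetric_form :: "nat \<Rightarrow> ('f list \<Rightarrow> 'k) \<Rightarrow> bool" where
  "symmetric_form n F \<longleftrightarrow>
     (\<forall>\<sigma>. \<sigma> permutes {..<n} \<longrightarrow> (\<forall>\<phi>s. length \<phi>s = n \<longrightarrow> F (map (\<lambda>i. \<phi>s ! \<sigma> i) [0..<n]) = F \<phi>s))"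

lemma TensInv_iff:
  "F \<in> TensInv sc Bd d n \<longleftrightarrow> (\<exists>r. valid Bd d n r \<and> F = tensel sc Bd d n r) \<and> symmetric_form n F"
  by (auto simp: TensInv_def symmetric_form_def)

lemma Simg_symmetric:
  assumes "symmetric_form n (tensel sc Bd e n r)"
  shows "Simg sc Bd e n r \<phi>s = fact n * tensel sc Bd e n r \<phi>s"
proof (cases "length \<phi>s = n \<and> set \<phi>s \<subseteq> Dual sc Bd e")
  case True
  then have len: "length \<phi>s = n" and set: "set \<phi>s \<subseteq> Dual sc Bd e" by auto
  have permuted: "(\<Sum>p\<leftarrow>r. fst p * (\<Prod>i<n. (\<phi>s ! i) (snd p ! \<tau> i))) = tensel sc Bd e n r \<phi>s"
    if \<tau>: "\<tau> permutes {..<n}" for \<tau>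
  proof -
    define \<chi>s where "\<chi>s = map (\<lambda>j. \<phi>s ! inv \<tau> j) [0..<n]"
    have inv: "inv \<tau> permutes {..<n}" using permutes_inv[OF \<tau>] .
    have "length \<chi>s = n" "set \<chi>s \<subseteq> Dual sc Bd e"
      using len set permutes_in_image[OF inv] by (auto simp: \<chi>s_def)
    moreover have "(\<Prod>i<n. (\<phi>s ! i) (us ! \<tau> i)) = (\<Prod>j<n. (\<chi>s ! j) (us ! j))" for us
      using prod.reindex_bij_betw[OF permutes_imp_bij[OF \<tau>], of "\<lambda>j. (\<phi>s ! inv \<tau> j) (us ! j)"]
      by (simp add: \<chi>s_def permutes_inverses(2)[OF \<tau>])
    ultimately have "(\<Sum>p\<leftarrow>r. fst p * (\<Prod>i<n. (\<phi>s ! i) (snd p ! \<tau> i))) = tensel sc Bd e n r \<chi>s"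
      by (simp add: tensel_def split_def)
    also have "\<dots> = tensel sc Bd e n r \<phi>s"
      using assms inv len unfolding symmetric_form_def \<chi>s_def by blast
    finally show ?thesis .
  qed
  have "Simg sc Bd e n r \<phi>s
      = (\<Sum>p\<leftarrow>r. \<Sum>\<tau> | \<tau> permutes {..<n}. fst p * (\<Prod>i<n. (\<phi>s ! i) (snd p ! \<tau> i)))"
    using True by (simp add: Simg_def split_def sum_distrib_left)
  also have "\<dots> = (\<Sum>\<tau> | \<tau> permutes {..<n}. \<Sum>p\<leftarrow>r. fst p * (\<Prod>i<n. (\<phi>s ! i) (snd p ! \<tau> i)))"
    by (rule sum_list_sum_commute)
  also have "\<dots> = (\<Sum>\<tau> | \<tau> permutes {..<n}. tensel sc Bd e n r \<phi>s)"
    using permuted by (intro sum.cong) simp_all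
  finally show ?thesis by (simp add: card_permutations)
next
  case False
  then show ?thesis by (simp only: Simg_outside[OF False] tensel_outside[OF False]) simp
qed

(* S(u_1 ... u_n) is the sum over T \<subseteq> {..<n} of (-1)^(n - |T|) times the n-th tensor power
   of the sum of the u_j with j \<in> T. *)
definition polarisation :: "nat \<Rightarrow> 'k::comm_ring_1 \<times> 'b::comm_monoid_add list \<Rightarrow> ('k \<times> 'b) list" where
  "polarisation n x = map (\<lambda>T. (fst x * (-1) ^ (n - card T), \<Sum>j\<in>T. snd x ! j)) (map set (subseqs [0..<n]))"

lemma sum_list_polarisation:
  "(\<Sum>y\<leftarrow>polarisation n x. f y) = (\<Sum>T\<in>Pow {..<n}. f (fst x * (-1) ^ (n - card T), \<Sum>j\<in>T. snd x ! j))"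
proof -
  let ?g = "\<lambda>T. f (fst x * (-1) ^ (n - card T), \<Sum>j\<in>T. snd x ! j)"
  have "(\<Sum>y\<leftarrow>polarisation n x. f y) = sum_list (map ?g (map set (subseqs [0..<n])))"
    by (simp add: polarisation_def comp_def)
  also have "\<dots> = sum ?g (set (map set (subseqs [0..<n])))"
    by (rule sum_list_distinct_conv_sum_set) (simp add: distinct_set_subseqs)
  also have "set (map set (subseqs [0..<n])) = Pow {..<n}"
    using subseqs_powset[of "[0..<n]"] by (simp add: atLeast0LessThan)
  finally show ?thesis .
qed

lemma polarisation_in_graded_piece:
  assumes "std_graded_algebra sc Bd" "length (snd x) = n" "set (snd x) \<subseteq> Bd e" "y \<in> set (polarisation n x)"
  shows "snd y \<in> Bd e"
proof -
  from assms(4) obtain xs where xs: "xs \<in> set (subseqs [0..<n])" and y: "snd y = (\<Sum>j\<in>set xs. snd x ! j)"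
    by (auto simp: polarisation_def)
  from xs have "set xs \<subseteq> {..<n}"
    using subseqs_powset[of "[0..<n]"] by (auto simp: atLeast0LessThan)
  with assms(2,3) show ?thesis
    unfolding y using nth_mem by (auto intro!: graded_piece_sum[OF assms(1)])
qed

lemma tensel_powers_polarisation:
  assumes SGA: "std_graded_algebra sc Bd"
    and \<phi>s: "length \<phi>s = n" "set \<phi>s \<subseteq> Dual sc Bd e" and us: "length us = n" "set us \<subseteq> Bd e"
  shows "tensel sc Bd e n (map (\<lambda>(a, u). (a, replicate n u)) (polarisation n (c, us))) \<phi>s
    = Simg sc Bd e n [(c, us)] \<phi>s"
proof -
  have "tensel sc Bd e n (map (\<lambda>(a, u). (a, replicate n u)) (polarisation n (c, us))) \<phi>s
      = (\<Sum>T\<in>Pow {..<n}. c * (-1) ^ (n - card T) * (\<Prod>i<n. (\<phi>s ! i) (\<Sum>j\<in>T. us ! j)))"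
    using \<phi>s by (simp add: tensel_powers) (simp add: sum_list_polarisation)
  also have "\<dots> = c * (\<Sum>\<tau> | \<tau> permutes {..<n}. \<Prod>i<n. (\<phi>s ! i) (us ! \<tau> i))"
    by (simp add: Dual_polarisation[OF SGA \<phi>s us] sum_distrib_left mult.assoc)
  also have "\<dots> = Simg sc Bd e n [(c, us)] \<phi>s"
    using \<phi>s by (simp add: Simg_def)
  finally show ?thesis .
qed

lemma Simg_eq_tensel_powers:
  assumes SGA: "std_graded_algebra sc Bd" and r: "valid Bd e n r"
  shows "\<exists>R. (\<forall>x\<in>set R. snd x \<in> Bd e) \<and>
    Simg sc Bd e n r = tensel sc Bd e n (map (\<lambda>(a, u). (a, replicate n u)) R)"
proof (intro exI conjI ballI ext)
  define R where "R = concat (map (polarisation n) r)"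
  have x: "length (snd x) = n" "set (snd x) \<subseteq> Bd e" if "x \<in> set r" for x
    using that r by (auto simp: valid_def split_def)
  show "snd y \<in> Bd e" if "y \<in> set R" for y
  proof -
    from that obtain x where "x \<in> set r" "y \<in> set (polarisation n x)" by (auto simp: R_def)
    then show ?thesis using polarisation_in_graded_piece[OF SGA x] by blast
  qed
  fix \<phi>s
  show "Simg sc Bd e n r \<phi>s = tensel sc Bd e n (map (\<lambda>(a, u). (a, replicate n u)) R) \<phi>s"
  proof (cases "length \<phi>s = n \<and> set \<phi>s \<subseteq> Dual sc Bd e")
    case True
    then have "Simg sc Bd e n r \<phi>s = (\<Sum>x\<leftarrow>r. Simg sc Bd e n [x] \<phi>s)"
      by (simp add: Simg_def split_def)
    also have "\<dots> = (\<Sum>x\<leftarrow>r. tensel sc Bd e n (map (\<lambda>(a, u). (a, replicate n u)) (polarisation n x)) \<phi>s)"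
      using True x tensel_powers_polarisation[OF SGA] by (intro arg_cong[where f = sum_list] map_cong) auto
    also have "\<dots> = tensel sc Bd e n (map (\<lambda>(a, u). (a, replicate n u)) R) \<phi>s"
      using True by (simp add: tensel_powers R_def sum_list_map_concat)
    finally show ?thesis .
  next
    case False
    then show ?thesis by (simp only: tensel_outside[OF False] Simg_outside[OF False])
  qed
qed

lemma TensInv_eq_powers:
  fixes sc :: "'k::field_char_0 \<Rightarrow> 'b::comm_ring_1 \<Rightarrow> 'b"
  assumes SGA: "std_graded_algebra sc Bd" and "tensel sc Bd e n rg \<in> TensInv sc Bd e n"
  shows "\<exists>R. (\<forall>x\<in>set R. snd x \<in> Bd e) \<and>
    tensel sc Bd e n rg = tensel sc Bd e n (map (\<lambda>(a, u). (a, replicate n u)) R)"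
proof -
  from assms(2) obtain r where r: "valid Bd e n r" "tensel sc Bd e n rg = tensel sc Bd e n r"
    and sym: "symmetric_form n (tensel sc Bd e n r)"
    by (auto simp: TensInv_iff)
  obtain R where R: "\<forall>x\<in>set R. snd x \<in> Bd e"
    and Simg_R: "Simg sc Bd e n r = tensel sc Bd e n (map (\<lambda>(a, u). (a, replicate n u)) R)"
    using Simg_eq_tensel_powers[OF SGA r(1)] by blast
  have "map (\<lambda>(a, u). (a, replicate n u)) (rscale (1 / fact n) R)
      = rscale (1 / fact n) (map (\<lambda>(a, u). (a, replicate n u)) R)"
    by (induction R) (auto simp: rscale_def)
  then have "tensel sc Bd e n rg = tensel sc Bd e n (map (\<lambda>(a, u). (a, replicate n u)) (rscale (1 / fact n) R))"
    using Simg_symmetric[OF sym] by (simp add: fun_eq_iff tensel_rscale r(2) flip: Simg_R)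
  moreover have "\<forall>x\<in>set (rscale (1 / fact n) R). snd x \<in> Bd e"
    using R by (auto simp: rscale_def)
  ultimately show ?thesis by blast
qed

definition rmult_factors :: "'b::times \<Rightarrow> ('k \<times> 'b list) list \<Rightarrow> ('k \<times> 'b list) list" where
  "rmult_factors u r = map (\<lambda>(c, ws). (c, map (\<lambda>w. u * w) ws)) r"

lemma valid_rmult_factors:
  assumes "std_graded_algebra sc Bd" "u \<in> Bd e" "valid Bd d n r"
  shows "valid Bd (e + d) n (rmult_factors u r)"
  using assms(3) graded_mult_closed[OF assms(1,2)] unfolding valid_def rmult_factors_def by fastforce

lemma symel_rmult_factors:
  assumes SGA: "std_graded_algebra sc Bd" and u: "u \<in> Bd e"
  shows "symel sc Bd (e + d) (rmult_factors u r) \<phi> =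
    (if \<phi> \<in> Dual sc Bd (e + d) then symel sc Bd d r (\<lambda>x. \<phi> (u * x)) else 0)"
proof (cases "\<phi> \<in> Dual sc Bd (e + d)")
  case True
  then have D: "(\<lambda>x. \<phi> (u * x)) \<in> Dual sc Bd d" by (rule Dual_mult_left[OF SGA _ u])
  show ?thesis
  proof (induction r)
    case Nil
    then show ?case by (simp add: rmult_factors_def symel_Nil)
  next
    case (Cons x r)
    then show ?case
      using True D by (cases x) (simp add: rmult_factors_def symel_Cons comp_def)
  qed
qed (simp add: symel_def)

lemma Dcomp_rmult_factors:
  assumes SGA: "std_graded_algebra sc Bd" and u: "u \<in> Bd e" and r: "valid Bd d n r"
  shows "Dcomp sc Bd (e + d) n i (rmult_factors u r) (\<phi>, \<psi>) =
    (if \<phi> \<in> Dual sc Bd (e + d) \<and> \<psi> \<in> Dual sc Bd (e + d)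
     then Dcomp sc Bd d n i r (\<lambda>x. \<phi> (u * x), \<lambda>x. \<psi> (u * x)) else 0)"
proof (cases "\<phi> \<in> Dual sc Bd (e + d) \<and> \<psi> \<in> Dual sc Bd (e + d)")
  case True
  then have D: "(\<lambda>x. \<phi> (u * x)) \<in> Dual sc Bd d" "(\<lambda>x. \<psi> (u * x)) \<in> Dual sc Bd d"
    using Dual_mult_left[OF SGA _ u] by blast+
  have "Dcomp sc Bd (e + d) n i (rmult_factors u r) (\<phi>, \<psi>) = Dcomp sc Bd d n i r (\<lambda>x. \<phi> (u * x), \<lambda>x. \<psi> (u * x))"
    using r
  proof (induction r)
    case Nil
    then show ?case by (simp add: rmult_factors_def Dcomp_Nil)
  next
    case (Cons x r)
    obtain c ws where x: "x = (c, ws)" by fastforce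
    from Cons.prems have len: "length ws = n" and vr: "valid Bd d n r" by (auto simp: x valid_Cons)
    have "(\<Sum>S\<in>{S. S \<subseteq> {..<n} \<and> card S = i}.
          (\<Prod>k\<in>S. \<phi> (map ((*) u) ws ! k)) * (\<Prod>k\<in>{..<n} - S. \<psi> (map ((*) u) ws ! k)))
        = (\<Sum>S\<in>{S. S \<subseteq> {..<n} \<and> card S = i}.
          (\<Prod>k\<in>S. \<phi> (u * ws ! k)) * (\<Prod>k\<in>{..<n} - S. \<psi> (u * ws ! k)))"
      using len by (intro sum.cong refl arg_cong2[where f = "(*)"] prod.cong) auto
    then show ?case
      using True D Cons.IH[OF vr] by (simp add: x rmult_factors_def Dcomp_Cons)
  qed
  with True show ?thesis by simp
next
  case False
  then show ?thesis by (simp only: Dcomp_outside_Dual[OF False] if_False)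
qed

lemma Simg_rmult_factors:
  assumes SGA: "std_graded_algebra sc Bd" and u: "u \<in> Bd e" and r: "valid Bd d n r"
    and \<phi>s: "length \<phi>s = n" "set \<phi>s \<subseteq> Dual sc Bd (e + d)"
  shows "Simg sc Bd (e + d) n (rmult_factors u r) \<phi>s = Simg sc Bd d n r (map (\<lambda>\<psi> x. \<psi> (u * x)) \<phi>s)"
proof -
  define \<chi>s where "\<chi>s = map (\<lambda>\<psi> x. \<psi> (u * x)) \<phi>s"
  have "set \<chi>s \<subseteq> Dual sc Bd d"
    using \<phi>s Dual_mult_left[OF SGA _ u] by (auto simp: \<chi>s_def)
  have factor: "(\<Prod>i<n. (\<phi>s ! i) (map ((*) u) ws ! \<tau> i)) = (\<Prod>i<n. (\<chi>s ! i) (ws ! \<tau> i))"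
    if "length ws = n" "\<tau> permutes {..<n}" for ws \<tau>
    using that \<phi>s(1) permutes_in_image[OF that(2)] by (intro prod.cong) (auto simp: \<chi>s_def)
  have "(\<Sum>(c, ws)\<leftarrow>rmult_factors u r'. c * (\<Sum>\<tau> | \<tau> permutes {..<n}. \<Prod>i<n. (\<phi>s ! i) (ws ! \<tau> i)))
     = (\<Sum>(c, ws)\<leftarrow>r'. c * (\<Sum>\<tau> | \<tau> permutes {..<n}. \<Prod>i<n. (\<chi>s ! i) (ws ! \<tau> i)))"
    if "valid Bd d n r'" for r'
    using that
  proof (induction r')
    case (Cons x r')
    then show ?case
      using factor by (cases x) (simp add: rmult_factors_def valid_Cons)
  qed (simp add: rmult_factors_def)
  then show ?thesis
    using r \<phi>s \<open>set \<chi>s \<subseteq> Dual sc Bd d\<close> by (simp add: Simg_def \<chi>s_def)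
qed

lemma Simg_rmult_factors_eq_tprod:
  assumes SGA: "std_graded_algebra sc Bd" and u: "u \<in> Bd e" and "valid Bd d n r" "valid Bd d n rf"
    and "Simg sc Bd d n r = tensel sc Bd d n rf"
  shows "Simg sc Bd (e + d) n (rmult_factors u r) = tensel sc Bd (e + d) n (tprod [(1, replicate n u)] rf)"
proof (rule ext)
  fix \<phi>s
  show "Simg sc Bd (e + d) n (rmult_factors u r) \<phi>s = tensel sc Bd (e + d) n (tprod [(1, replicate n u)] rf) \<phi>s"
  proof (cases "length \<phi>s = n \<and> set \<phi>s \<subseteq> Dual sc Bd (e + d)")
    case True
    then show ?thesis
      using assms by (simp add: Simg_rmult_factors tensel_tprod_replicate)
  next
    case False
    then show ?thesis by (simp only: tensel_outside[OF False] Simg_outside[OF False])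
  qed
qed

lemma TensInv_replicate:
  fixes sc :: "'k::field_char_0 \<Rightarrow> 'b::comm_ring_1 \<Rightarrow> 'b"
  assumes "u \<in> Bd e"
  shows "tensel sc Bd e n [(1, replicate n u)] \<in> TensInv sc Bd e n"
  unfolding TensInv_iff symmetric_form_def
proof (intro conjI exI allI impI)
  show "valid Bd e n [(1, replicate n u)]" using assms by (auto simp: valid_def)
  fix \<sigma> :: "nat \<Rightarrow> nat" and \<phi>s :: "('b \<Rightarrow> 'k) list"
  assume \<sigma>: "\<sigma> permutes {..<n}" and len: "length \<phi>s = n"
  have "set (map (\<lambda>i. \<phi>s ! \<sigma> i) [0..<n]) = set \<phi>s"
  proof -
    have "set (map (\<lambda>i. \<phi>s ! \<sigma> i) [0..<n]) = (\<lambda>j. \<phi>s ! j) ` \<sigma> ` {..<n}"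
      by (auto simp: atLeast0LessThan)
    also have "\<dots> = set \<phi>s"
      using permutes_image[OF \<sigma>] len by (auto simp: in_set_conv_nth)
    finally show ?thesis .
  qed
  moreover have "(\<Prod>i<n. (\<phi>s ! \<sigma> i) u) = (\<Prod>j<n. (\<phi>s ! j) u)"
    using prod.reindex_bij_betw[OF permutes_imp_bij[OF \<sigma>], of "\<lambda>j. (\<phi>s ! j) u"] by simp
  ultimately show "tensel sc Bd e n [(1, replicate n u)] (map (\<lambda>i. \<phi>s ! \<sigma> i) [0..<n])
      = tensel sc Bd e n [(1, replicate n u)] \<phi>s"
    using len by (simp add: tensel_def)
qed simp

lemma di_idealD:
  assumes "di_ideal sc Bd I" "valid Bd d n rf" "tensel sc Bd d n rf \<in> SI sc Bd I d n"
    "valid Bd e n rg" "tensel sc Bd e n rg \<in> TensInv sc Bd e n"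
  shows "tensel sc Bd (e + d) n (tprod rg rf) \<in> SI sc Bd I (e + d) n"
  using assms unfolding di_ideal_def by blast

lemma di_ideal_rmult_factors:
  fixes sc :: "'k::field_char_0 \<Rightarrow> 'b::comm_ring_1 \<Rightarrow> 'b"
  assumes SGA: "std_graded_algebra sc Bd" and I: "di_ideal sc Bd I"
    and p: "valid Bd d i p" "symel sc Bd d p \<in> I d i" and u: "u \<in> Bd e"
  shows "symel sc Bd (e + d) (rmult_factors u p) \<in> I (e + d) i"
proof -
  obtain rf where rf: "valid Bd d i rf" "tensel sc Bd d i rf = Simg sc Bd d i p"
    using Simg_eq_tensel[OF p(1)] by blast
  have "tensel sc Bd d i rf \<in> SI sc Bd I d i"
    unfolding SI_def rf(2) using p by blast
  moreover have "valid Bd e i [(1, replicate i u)]"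
    using u by (auto simp: valid_def)
  ultimately have "tensel sc Bd (e + d) i (tprod [(1, replicate i u)] rf) \<in> SI sc Bd I (e + d) i"
    using di_idealD[OF I rf(1)] TensInv_replicate[where Bd = Bd and e = e, OF u] by blast
  then obtain A where SA: "tensel sc Bd (e + d) i (tprod [(1, replicate i u)] rf) = Simg sc Bd (e + d) i A"
    and A: "valid Bd (e + d) i A" "symel sc Bd (e + d) A \<in> I (e + d) i"
    unfolding SI_def by blast
  have "Simg sc Bd (e + d) i A = Simg sc Bd (e + d) i (rmult_factors u p)"
    using Simg_rmult_factors_eq_tprod[OF SGA u p(1) rf(1)] rf(2) SA by simp
  then have "symel sc Bd (e + d) A = symel sc Bd (e + d) (rmult_factors u p)"
    by (rule symel_eq_if_Simg_eq[OF A(1) valid_rmult_factors[OF SGA u p(1)]])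
  with A(2) show ?thesis by simp
qed

lemma join_gens_rmult_factors:
  fixes sc :: "'k::field_char_0 \<Rightarrow> 'b::comm_ring_1 \<Rightarrow> 'b"
  assumes SGA: "std_graded_algebra sc Bd" and I: "di_ideal sc Bd I" and J: "di_ideal sc Bd J"
    and u: "u \<in> Bd e" and g: "g \<in> join_gens sc Bd I J d n i"
  shows "(\<lambda>z. if fst z \<in> Dual sc Bd (e + d) \<and> snd z \<in> Dual sc Bd (e + d)
      then g (\<lambda>x. fst z (u * x), \<lambda>x. snd z (u * x)) else 0) \<in> spanF (join_gens sc Bd I J (e + d) n i)"
proof -
  from g obtain a b where g_ab: "g = (\<lambda>(\<phi>, \<psi>). a \<phi> * b \<psi>)"
    and cases: "a \<in> I d i \<and> b \<in> SymP sc Bd d (n - i) \<or> a \<in> SymP sc Bd d i \<and> b \<in> J d (n - i)"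
    by (auto simp: tens2_def)
  have "is_ideal sc Bd I" "is_ideal sc Bd J"
    using I J by (simp_all add: di_ideal_def)
  then have "a \<in> SymP sc Bd d i" "b \<in> SymP sc Bd d (n - i)"
    using cases is_ideal_subset_SymP by blast+
  then obtain p q where p: "valid Bd d i p" "a = symel sc Bd d p"
    and q: "valid Bd d (n - i) q" "b = symel sc Bd d q"
    by (metis SymP_E)
  have eq: "(\<lambda>z. if fst z \<in> Dual sc Bd (e + d) \<and> snd z \<in> Dual sc Bd (e + d)
         then g (\<lambda>x. fst z (u * x), \<lambda>x. snd z (u * x)) else 0)
     = (\<lambda>(\<phi>, \<psi>). symel sc Bd (e + d) (rmult_factors u p) \<phi> * symel sc Bd (e + d) (rmult_factors u q) \<psi>)"
    by (auto simp: fun_eq_iff g_ab p(2) q(2) symel_rmult_factors[OF SGA u])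
  from cases show ?thesis
    unfolding eq
  proof
    assume "a \<in> I d i \<and> b \<in> SymP sc Bd d (n - i)"
    then have "symel sc Bd (e + d) (rmult_factors u p) \<in> I (e + d) i"
      using di_ideal_rmult_factors[OF SGA I p(1) _ u] p(2) by blast
    then show "(\<lambda>(\<phi>, \<psi>). symel sc Bd (e + d) (rmult_factors u p) \<phi> * symel sc Bd (e + d) (rmult_factors u q) \<psi>)
        \<in> spanF (join_gens sc Bd I J (e + d) n i)"
      using SymP_I[OF valid_rmult_factors[OF SGA u q(1)]] by (intro spanF_base UnI1 tens2_I)
  next
    assume "a \<in> SymP sc Bd d i \<and> b \<in> J d (n - i)"
    then have "symel sc Bd (e + d) (rmult_factors u q) \<in> J (e + d) (n - i)"
      using di_ideal_rmult_factors[OF SGA J q(1) _ u] q(2) by blast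
    then show "(\<lambda>(\<phi>, \<psi>). symel sc Bd (e + d) (rmult_factors u p) \<phi> * symel sc Bd (e + d) (rmult_factors u q) \<psi>)
        \<in> spanF (join_gens sc Bd I J (e + d) n i)"
      using SymP_I[OF valid_rmult_factors[OF SGA u p(1)]] by (intro spanF_base UnI2 tens2_I)
  qed
qed

lemma join_rmult_factors:
  fixes sc :: "'k::field_char_0 \<Rightarrow> 'b::comm_ring_1 \<Rightarrow> 'b"
  assumes SGA: "std_graded_algebra sc Bd" and I: "di_ideal sc Bd I" and J: "di_ideal sc Bd J"
    and r: "valid Bd d n r" "symel sc Bd d r \<in> join sc Bd I J d n" and u: "u \<in> Bd e"
  shows "symel sc Bd (e + d) (rmult_factors u r) \<in> join sc Bd I J (e + d) n"
proof (rule joinI[OF valid_rmult_factors[OF SGA u r(1)]])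
  fix i assume "i \<le> n"
  have "Dcomp sc Bd (e + d) n i (rmult_factors u r) = (\<lambda>z. if fst z \<in> Dual sc Bd (e + d) \<and> snd z \<in> Dual sc Bd (e + d)
      then Dcomp sc Bd d n i r (\<lambda>x. fst z (u * x), \<lambda>x. snd z (u * x)) else 0)"
  proof
    fix z
    show "Dcomp sc Bd (e + d) n i (rmult_factors u r) z = (if fst z \<in> Dual sc Bd (e + d) \<and> snd z \<in> Dual sc Bd (e + d)
      then Dcomp sc Bd d n i r (\<lambda>x. fst z (u * x), \<lambda>x. snd z (u * x)) else 0)"
      by (cases z) (simp only: Dcomp_rmult_factors[OF SGA u r(1)] fst_conv snd_conv)
  qed
  also have "\<dots> \<in> spanF (join_gens sc Bd I J (e + d) n i)"
    by (rule spanF_subst[OF joinD[OF r(2) r(1) refl \<open>i \<le> n\<close>]]) (rule join_gens_rmult_factors[OF SGA I J u])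
  finally show "Dcomp sc Bd (e + d) n i (rmult_factors u r) \<in> spanF (join_gens sc Bd I J (e + d) n i)" .
qed

lemma join_di_closed:
  fixes sc :: "'k::field_char_0 \<Rightarrow> 'b::comm_ring_1 \<Rightarrow> 'b"
  assumes SGA: "std_graded_algebra sc Bd" and I: "di_ideal sc Bd I" and J: "di_ideal sc Bd J"
    and rf: "valid Bd d n rf" "tensel sc Bd d n rf \<in> SI sc Bd (join sc Bd I J) d n"
    and rg: "valid Bd e n rg" "tensel sc Bd e n rg \<in> TensInv sc Bd e n"
  shows "tensel sc Bd (e + d) n (tprod rg rf) \<in> SI sc Bd (join sc Bd I J) (e + d) n"
proof -
  from rf(2) obtain r where "tensel sc Bd d n rf = Simg sc Bd d n r"
    and r: "valid Bd d n r" "symel sc Bd d r \<in> join sc Bd I J d n"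
    unfolding SI_def by blast
  then have Simg_r: "Simg sc Bd d n r = tensel sc Bd d n rf" by simp
  obtain R where R: "\<And>x. x \<in> set R \<Longrightarrow> snd x \<in> Bd e"
    and rg_R: "tensel sc Bd e n rg = tensel sc Bd e n (map (\<lambda>(a, u). (a, replicate n u)) R)"
    using TensInv_eq_powers[OF SGA rg(2)] by blast
  \<comment> \<open>With g the tensor of rg, g = \<Sum> a u^n over (a, u) in R, and u^n * S(r) = S(u.r).\<close>
  define r' where "r' = concat (map (\<lambda>x. rscale (fst x) (rmult_factors (snd x) r)) R)"
  have "valid Bd (e + d) n r'"
    unfolding r'_def by (intro valid_concat valid_rscale valid_rmult_factors[OF SGA R r(1)])
  moreover have "symel sc Bd (e + d) r' \<in> join sc Bd I J (e + d) n"
  proof -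
    have "symel sc Bd (e + d) r' = (\<lambda>\<phi>. \<Sum>x\<leftarrow>R. fst x * symel sc Bd (e + d) (rmult_factors (snd x) r) \<phi>)"
      by (simp add: r'_def fun_eq_iff symel_concat symel_rscale)
    also have "\<dots> \<in> join sc Bd I J (e + d) n"
      by (intro join_sum_list join_scale join_rmult_factors[OF SGA I J r] R)
    finally show ?thesis .
  qed
  moreover have "Simg sc Bd (e + d) n r' = tensel sc Bd (e + d) n (tprod rg rf)"
  proof
    fix \<phi>s
    have "Simg sc Bd (e + d) n r' \<phi>s
        = (\<Sum>x\<leftarrow>R. fst x * tensel sc Bd (e + d) n (tprod [(1, replicate n (snd x))] rf) \<phi>s)"
      unfolding r'_def Simg_concat Simg_rscale
      using Simg_rmult_factors_eq_tprod[OF SGA R r(1) rf(1) Simg_r] by (intro arg_cong[where f = sum_list] map_cong) auto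
    also have "\<dots> = tensel sc Bd (e + d) n (tprod (map (\<lambda>(a, u). (a, replicate n u)) R) rf) \<phi>s"
      by (rule tensel_tprod_powers[symmetric])
    also have "\<dots> = tensel sc Bd (e + d) n (tprod rg rf) \<phi>s"
      using tensel_tprod_cong_left[OF SGA rg(1) valid_powers[of R Bd e n, OF R] rf(1) rg_R] by simp
    finally show "Simg sc Bd (e + d) n r' \<phi>s = tensel sc Bd (e + d) n (tprod rg rf) \<phi>s" .
  qed
  ultimately show ?thesis
    unfolding SI_def mem_Collect_eq by (intro exI[of _ r']) simp
qed

theorem proposition4p2:
  fixes sc :: "'k::field_char_0 \<Rightarrow> 'b::comm_ring_1 \<Rightarrow> 'b"
    and Bd :: "nat \<Rightarrow> 'b set"
    and I J :: "nat \<Rightarrow> nat \<Rightarrow> (('b \<Rightarrow> 'k) \<Rightarrow> 'k) set"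
  assumes "std_graded_algebra sc Bd"
    and "di_ideal sc Bd I"
    and "di_ideal sc Bd J"
  shows "di_ideal sc Bd (join sc Bd I J)"
proof -
  have "is_ideal sc Bd (join sc Bd I J)"
    using join_is_ideal assms(2,3) unfolding di_ideal_def by blast
  then show ?thesis
    unfolding di_ideal_def using join_di_closed[OF assms] by blast
qed

end
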